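(* Let $n\ge 1$ and consider the system of ODEs $$\dot z_k=\gamma_k z_k-\beta_k z_k|z_k|^2+\alpha H_k(z_1,\dots,z_n),\qquad k\in\{1,\dots,n\},$$ with $z_k\in\mathbb{C}$, coupling parameter $\alpha\in\mathbb{R}$, non-zero constants $\beta_k,\gamma_k\in\mathbb{C}$ with $\gamma_k=\lambda+i\omega_k$ ($\lambda,\omega_k\in\mathbb{R}$), and smooth ($C^\infty$) interaction functions $H_k:\mathbb{C}^n\to\mathbb{C}$ satisfying $H_k(0)=0$ and $DH_k(0)=0$. Let $H^5_k$ denote the Taylor polynomial of $H_k$ at the origin up to order $5$ (a polynomial in $z_1,\dots,z_n,\bar z_1,\dots,\bar z_n$), and assume the non-resonance condition of the polynomial map $H^5=(H^5_1,\dots,H^5_n)$ holds. Then the ODE is locally (near $z=0$, for small $\alpha$) conjugate to a system of the form $$\dot u_k=\gamma_k u_k-\beta_k u_k|u_k|^2-\alpha^2 G_k(u)+\mathcal{O}\big(|\alpha||u|^6+|\alpha|^2|u|^5+|\alpha|^3|u|^4\big),\qquad k\in\{1,\dots,n\},$$ with $u_k\in\mathbb{C}$, for some complex polynomials $G_k$ (in $u$ and $\bar u$) having only terms of degree $3$ and higher.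
   Context: A polynomial here means a polynomial in $z_1,\dots,z_n$ and $\bar z_1,\dots,\bar z_n$ with complex coefficients. For a monomial $R(z)=c\,z_1^{s_1}\cdots z_n^{s_n}\bar z_1^{t_1}\cdots\bar z_n^{t_n}$ ($c\in\mathbb{C}$, $s_j,t_j$ non-negative integers), its $k$th non-resonance condition is $s_1\omega_1+\dots+s_n\omega_n-t_1\omega_1-\dots-t_n\omega_n-\omega_k\neq 0$. The $k$th non-resonance condition of a polynomial is the conjunction of the $k$th non-resonance conditions of all its monomial terms (with nonzero coefficient). The non-resonance condition of a polynomial map $H^5=(H^5_k)_{k}$ is the conjunction over all $k\in\{1,\dots,n\}$ of the $k$th non-resonance conditions of $H^5_k$. The $\mathcal{O}(\cdot)$ term denotes a remainder bounded in absolute value by a constant times the indicated expression for small $|\alpha|$ and $|u|$. *)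

theory Defs
  imports "HOL-Analysis.Analysis"
begin

definition dirderiv :: "('a::real_normed_vector \<Rightarrow> 'b::real_normed_vector) \<Rightarrow> 'a \<Rightarrow> 'a \<Rightarrow> 'b" where
  "dirderiv g v x = vector_derivative (\<lambda>t::real. g (x + t *\<^sub>R v)) (at 0)"

fun iter_dirderiv :: "('a::real_normed_vector \<Rightarrow> 'b::real_normed_vector) \<Rightarrow> 'a list \<Rightarrow> 'a \<Rightarrow> 'b" where
  "iter_dirderiv g [] = g"
| "iter_dirderiv g (v # vs) = dirderiv (iter_dirderiv g vs) v"

definition smooth_map :: "('a::euclidean_space \<Rightarrow> 'b::real_normed_vector) \<Rightarrow> bool" where
  "smooth_map g \<longleftrightarrow>
     (\<forall>vs. continuous_on UNIV (iter_dirderiv g vs)) \<and>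
     (\<forall>vs v x. (\<lambda>t::real. iter_dirderiv g vs (x + t *\<^sub>R v)) differentiable (at 0))"

definition taylor_poly :: "nat \<Rightarrow> ('a::real_normed_vector \<Rightarrow> 'b::real_normed_vector) \<Rightarrow> 'a \<Rightarrow> 'b" where
  "taylor_poly m g z = (\<Sum>j\<le>m. (1 / fact j) *\<^sub>R iter_dirderiv g (replicate j z) 0)"

text \<open>Polynomials in z_1..z_n, conj z_1 .. conj z_n given by a coefficient function on
  exponent pairs (s,t); the monomial (s,t) is prod_j z_j^(s j) * conj(z_j)^(t j).\<close>
definition zzbar_monomial :: "('n::finite \<Rightarrow> nat) \<Rightarrow> ('n \<Rightarrow> nat) \<Rightarrow> complex^'n \<Rightarrow> complex" where
  "zzbar_monomial s t z = (\<Prod>j\<in>UNIV. (z $ j) ^ s j * (cnj (z $ j)) ^ t j)"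

definition zzbar_poly :: "(('n::finite \<Rightarrow> nat) \<times> ('n \<Rightarrow> nat) \<Rightarrow> complex) \<Rightarrow> complex^'n \<Rightarrow> complex" where
  "zzbar_poly c z = (\<Sum>p\<in>{p. c p \<noteq> 0}. c p * zzbar_monomial (fst p) (snd p) z)"

definition is_zzbar_poly_repr :: "(('n::finite \<Rightarrow> nat) \<times> ('n \<Rightarrow> nat) \<Rightarrow> complex) \<Rightarrow> (complex^'n \<Rightarrow> complex) \<Rightarrow> bool" where
  "is_zzbar_poly_repr c f \<longleftrightarrow> finite {p. c p \<noteq> 0} \<and> (\<forall>z. f z = zzbar_poly c z)"

definition monomial_nonres :: "('n::finite \<Rightarrow> real) \<Rightarrow> 'n \<Rightarrow> ('n \<Rightarrow> nat) \<Rightarrow> ('n \<Rightarrow> nat) \<Rightarrow> bool" where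
  "monomial_nonres \<omega> k s t \<longleftrightarrow>
     (\<Sum>j\<in>UNIV. real (s j) * \<omega> j) - (\<Sum>j\<in>UNIV. real (t j) * \<omega> j) - \<omega> k \<noteq> 0"

definition poly_map_nonres :: "('n::finite \<Rightarrow> real) \<Rightarrow> (complex^'n \<Rightarrow> complex^'n) \<Rightarrow> bool" where
  "poly_map_nonres \<omega> P \<longleftrightarrow>
     (\<forall>k. \<exists>c. is_zzbar_poly_repr c (\<lambda>z. P z $ k) \<and>
          (\<forall>s t. c (s, t) \<noteq> 0 \<longrightarrow> monomial_nonres \<omega> k s t))"

definition monomial_degree :: "('n::finite \<Rightarrow> nat) \<Rightarrow> ('n \<Rightarrow> nat) \<Rightarrow> nat" where
  "monomial_degree s t = (\<Sum>j\<in>UNIV. s j + t j)"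

definition coupled_field ::
  "('n::finite \<Rightarrow> complex) \<Rightarrow> ('n \<Rightarrow> complex) \<Rightarrow> (complex^'n \<Rightarrow> complex^'n) \<Rightarrow> real \<Rightarrow> complex^'n \<Rightarrow> complex^'n" where
  "coupled_field \<gamma> \<beta> H \<alpha> z =
     (\<chi> k. \<gamma> k * z $ k - \<beta> k * z $ k * complex_of_real ((cmod (z $ k))\<^sup>2) + complex_of_real \<alpha> * H z $ k)"

end

theory Submission
  imports Defs
begin

text \<open>Write the field as \<open>Au + N(u) + \<alpha> H(u)\<close> with \<open>A = diag \<gamma>\<close> and \<open>N\<close> the cubic part, and
  change variables by \<open>z = u + \<alpha> P(u)\<close> with a polynomial map \<open>P\<close>. Up to \<open>O(|u|\<^sup>6)\<close>, \<open>H\<close> may be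
  replaced by its Taylor polynomial \<open>T\<close>, which has no terms of degree \<open>< 2\<close>. The \<open>\<alpha>\<close>-terms of
  \<open>F(u + \<alpha>P(u)) - (I + \<alpha>DP)(Au + Nu)\<close> are \<open>T + AP + DN\<cdot>P - DP\<cdot>(Au + Nu)\<close>. Since a monomial is an eigenvector of
  \<open>M \<mapsto> DM\<cdot>Au\<close> whose eigenvalue differs from \<open>\<gamma>\<^sub>k\<close> in its imaginary part exactly by the
  \<open>k\<close>-th non-resonance defect, the homological equation \<open>DP\<cdot>Au - AP = T\<close> is solved monomial by
  monomial. The bracket of this \<open>P\<close> with \<open>N\<close> is again non-resonant, of degree \<open>\<ge> 4\<close>, and its terms
  of degree 4 and 5 are removed by a second homological correction. At order \<open>\<alpha>\<^sup>2\<close> the leading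
  term is \<open>DT\<cdot>P\<close>, whose part of degree 3 and 4 is \<open>-G\<close>; every other contribution is bounded by
  \<open>|\<alpha>||u|\<^sup>6 + \<alpha>\<^sup>2|u|\<^sup>5 + |\<alpha>|\<^sup>3|u|\<^sup>4\<close>, and the remainder \<open>R\<close> is obtained by inverting
  \<open>I + \<alpha> DP\<close>, which is close to the identity.\<close>

section \<open>Directional derivatives and Taylor remainders\<close>

lemma has_vector_derivative_along_line:
  assumes diff: "\<And>y. (\<lambda>t. g (y + t *\<^sub>R v)) differentiable (at 0)"
  shows "((\<lambda>t. g (x + t *\<^sub>R v)) has_vector_derivative dirderiv g v (x + s *\<^sub>R v)) (at s)"
proof -
  let ?y = "x + s *\<^sub>R v"
  have at0: "((\<lambda>t. g (?y + t *\<^sub>R v)) has_vector_derivative dirderiv g v ?y) (at 0)"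
    using diff[of ?y] unfolding dirderiv_def by (simp add: vector_derivative_works)
  have shift: "((\<lambda>t. t - s) has_vector_derivative 1) (at s)"
    by (auto intro!: derivative_eq_intros simp: has_vector_derivative_def)
  have "(((\<lambda>t. g (?y + t *\<^sub>R v)) \<circ> (\<lambda>t. t - s)) has_vector_derivative (1 *\<^sub>R dirderiv g v ?y)) (at s)"
    by (rule vector_diff_chain_at[OF shift]) (simp add: at0)
  moreover have "((\<lambda>t. g (?y + t *\<^sub>R v)) \<circ> (\<lambda>t. t - s)) = (\<lambda>t. g (x + t *\<^sub>R v))"
    by (auto simp: fun_eq_iff algebra_simps)
  ultimately show ?thesis by simp
qed

lemma bounded_linear_Basis_combination:
  fixes c :: "'a::euclidean_space \<Rightarrow> 'b::real_normed_vector"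
  shows "bounded_linear (\<lambda>h. \<Sum>b\<in>Basis. (h \<bullet> b) *\<^sub>R c b)"
proof -
  have "linear (\<lambda>h. \<Sum>b\<in>Basis. (h \<bullet> b) *\<^sub>R c b)"
    by (rule linearI) (simp_all add: inner_add_left scaleR_add_left sum.distrib scaleR_sum_right)
  then show ?thesis by (simp add: linear_conv_bounded_linear)
qed

lemma line_increment_bound:
  assumes diff: "\<And>y. (\<lambda>t. g (y + t *\<^sub>R b)) differentiable (at 0)"
    and near: "\<And>s. \<bar>s\<bar> \<le> \<bar>t\<bar> \<Longrightarrow> norm (dirderiv g b (p + s *\<^sub>R b) - D) \<le> e"
  shows "norm (g (p + t *\<^sub>R b) - g p - t *\<^sub>R D) \<le> 3 * e * \<bar>t\<bar>"
proof -
  define f where "f s = g (p + s *\<^sub>R b)" for s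
  define f' where "f' s = dirderiv g b (p + s *\<^sub>R b)" for s
  have in_range: "\<bar>s\<bar> \<le> \<bar>t\<bar>" if "s \<in> closed_segment 0 t" for s
    using that by (auto simp: closed_segment_eq_real_ivl split: if_splits)
  have osc: "norm (f' s - f' 0) \<le> 2 * e" if "s \<in> closed_segment 0 t" for s
    using norm_triangle_ineq4[of "f' s - D" "f' 0 - D"] near[OF in_range[OF that]] near[of 0]
    by (simp add: f'_def)
  have "(f has_vector_derivative f' s) (at s within closed_segment 0 t)" for s
    unfolding f_def f'_def by (rule has_vector_derivative_at_within[OF has_vector_derivative_along_line[OF diff]])
  then have "norm (f t - f 0 - (t - 0) *\<^sub>R f' 0) \<le> norm (t - 0) * (2 * e)"
    by (rule vector_differentiable_bound_linearization[of "closed_segment 0 t" f f' 0 t 0 "2 * e"])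
      (simp_all add: osc)
  then have lin: "norm (f t - f 0 - t *\<^sub>R f' 0) \<le> 2 * e * \<bar>t\<bar>"
    by (simp add: mult_ac)
  have shift: "norm (t *\<^sub>R (f' 0 - D)) \<le> e * \<bar>t\<bar>"
    using mult_left_mono[OF near[of 0], of "\<bar>t\<bar>"] by (simp add: f'_def mult.commute)
  have "g (p + t *\<^sub>R b) - g p - t *\<^sub>R D = (f t - f 0 - t *\<^sub>R f' 0) + t *\<^sub>R (f' 0 - D)"
    by (simp add: f_def algebra_simps)
  then have "norm (g (p + t *\<^sub>R b) - g p - t *\<^sub>R D)
      \<le> norm (f t - f 0 - t *\<^sub>R f' 0) + norm (t *\<^sub>R (f' 0 - D))"
    by (simp only: norm_triangle_ineq)
  also have "\<dots> \<le> 3 * e * \<bar>t\<bar>"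
    using lin shift by (simp add: algebra_simps)
  finally show ?thesis .
qed

lemma sum_nth_distinct_list:
  assumes "distinct bs"
  shows "(\<Sum>j<length bs. f (bs ! j)) = (\<Sum>b\<in>set bs. f b)"
proof -
  have "(\<Sum>j<length bs. f (bs ! j)) = sum_list (map f bs)"
    by (simp add: sum_list_sum_nth atLeast0LessThan)
  then show ?thesis using assms by (simp add: sum_list_distinct_conv_sum_set)
qed

text \<open>Walk from \<open>x\<close> to \<open>y\<close> along the coordinate directions and compare each increment with
  the directional derivative at \<open>x\<close>.\<close>

lemma coordinate_walk_bound:
  fixes g :: "'a::euclidean_space \<Rightarrow> 'b::real_normed_vector" and bs :: "'a list"
  assumes bs: "distinct bs" "set bs = Basis"
    and diff: "\<And>v y. (\<lambda>t. g (y + t *\<^sub>R v)) differentiable (at 0)"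
    and near: "\<And>z b. norm (z - x) < r \<Longrightarrow> b \<in> Basis \<Longrightarrow> norm (dirderiv g b z - dirderiv g b x) \<le> e"
    and y: "real (length bs) * norm (y - x) < r" and "e \<ge> 0"
  shows "norm (g y - g x - (\<Sum>b\<in>Basis. ((y - x) \<bullet> b) *\<^sub>R dirderiv g b x)) \<le> 3 * e * real (length bs) * norm (y - x)"
proof -
  define m h where "m = length bs" and "h = y - x"
  define t where "t i = h \<bullet> bs ! i" for i
  define p where "p i = x + (\<Sum>j<i. t j *\<^sub>R bs ! j)" for i
  have bsB: "bs ! i \<in> Basis" if "i < m" for i
    using bs(2) nth_mem[of i bs] that unfolding m_def by blast
  have tb: "\<bar>t i\<bar> \<le> norm h" if "i < m" for i
    unfolding t_def using Basis_le_norm[OF bsB[OF that], of h] .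
  have sum_Basis: "(\<Sum>j<m. f (bs ! j)) = (\<Sum>b\<in>Basis. f b)" for f :: "'a \<Rightarrow> 'c::comm_monoid_add"
    using sum_nth_distinct_list[OF bs(1)] bs(2) by (simp add: m_def)
  have pm: "p m = y"
    using sum_Basis[of "\<lambda>b. (h \<bullet> b) *\<^sub>R b"] by (simp add: p_def t_def h_def euclidean_representation)
  have path_near: "norm (p i + s *\<^sub>R bs ! i - x) < r" if "i < m" "\<bar>s\<bar> \<le> \<bar>t i\<bar>" for i s
  proof -
    have "norm (p i + s *\<^sub>R bs ! i - x) = norm ((\<Sum>j<i. t j *\<^sub>R bs ! j) + s *\<^sub>R bs ! i)"
      by (simp add: p_def)
    also have "\<dots> \<le> (\<Sum>j<i. norm (t j *\<^sub>R bs ! j)) + norm (s *\<^sub>R bs ! i)"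
      by (intro order_trans[OF norm_triangle_ineq] add_mono norm_sum order_refl)
    also have "\<dots> \<le> (\<Sum>j<i. norm h) + norm h"
      using that tb bsB by (intro add_mono sum_mono) (auto simp: order_trans[OF _ tb])
    also have "\<dots> = real (Suc i) * norm h" by (simp add: algebra_simps)
    also have "\<dots> \<le> real m * norm h" using that by (intro mult_right_mono) auto
    finally show ?thesis using y by (simp add: m_def h_def)
  qed
  have step: "norm (g (p (Suc i)) - g (p i) - t i *\<^sub>R dirderiv g (bs ! i) x) \<le> 3 * e * norm h"
    if i: "i < m" for i
  proof -
    have "norm (g (p i + t i *\<^sub>R bs ! i) - g (p i) - t i *\<^sub>R dirderiv g (bs ! i) x) \<le> 3 * e * \<bar>t i\<bar>"
      using near[OF _ bsB[OF i]] path_near[OF i] by (intro line_increment_bound diff) auto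
    also have "\<dots> \<le> 3 * e * norm h" using tb[OF i] \<open>e \<ge> 0\<close> by (intro mult_left_mono) auto
    finally show ?thesis by (simp add: p_def add.assoc)
  qed
  have "g y - g x - (\<Sum>b\<in>Basis. (h \<bullet> b) *\<^sub>R dirderiv g b x)
      = (\<Sum>i<m. g (p (Suc i)) - g (p i) - t i *\<^sub>R dirderiv g (bs ! i) x)"
    using sum_lessThan_telescope[of "\<lambda>i. g (p i)" m] pm sum_Basis[of "\<lambda>b. (h \<bullet> b) *\<^sub>R dirderiv g b x"]
    by (simp add: sum_subtractf p_def t_def)
  then have "norm (g y - g x - (\<Sum>b\<in>Basis. (h \<bullet> b) *\<^sub>R dirderiv g b x))
      \<le> (\<Sum>i<m. norm (g (p (Suc i)) - g (p i) - t i *\<^sub>R dirderiv g (bs ! i) x))"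
    by (simp add: norm_sum)
  also have "\<dots> \<le> (\<Sum>i<m. 3 * e * norm h)" by (intro sum_mono step) auto
  finally show ?thesis by (simp add: h_def m_def mult_ac)
qed

lemma has_derivative_of_continuous_dirderiv:
  fixes g :: "'a::euclidean_space \<Rightarrow> 'b::real_normed_vector"
  assumes cont: "\<And>v. continuous_on UNIV (dirderiv g v)"
    and diff: "\<And>v y. (\<lambda>t. g (y + t *\<^sub>R v)) differentiable (at 0)"
  shows "(g has_derivative (\<lambda>h. \<Sum>b\<in>Basis. (h \<bullet> b) *\<^sub>R dirderiv g b x)) (at x)"
  unfolding has_derivative_at_alt
proof (intro conjI allI impI bounded_linear_Basis_combination)
  fix e :: real assume e: "e > 0"
  obtain bs where bs: "distinct bs" "set bs = (Basis :: 'a set)"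
    using finite_distinct_list[OF finite_Basis] by blast
  define m where "m = length bs"
  have m0: "m > 0" using bs nonempty_Basis unfolding m_def by (metis length_greater_0_conv set_empty)
  define e' where "e' = e / (3 * real m)"
  have e': "e' > 0" using e m0 by (simp add: e'_def)
  have "\<forall>\<^sub>F z in nhds x. \<forall>b\<in>Basis. dist (dirderiv g b z) (dirderiv g b x) < e'"
  proof (rule eventually_ball_finite[OF finite_Basis], intro ballI)
    fix b :: 'a
    have "(dirderiv g b \<longlongrightarrow> dirderiv g b x) (nhds x)"
      using cont[of b] by (simp add: continuous_on_eq_continuous_at isCont_def tendsto_at_iff_tendsto_nhds)
    then show "\<forall>\<^sub>F z in nhds x. dist (dirderiv g b z) (dirderiv g b x) < e'"
      using e' by (rule tendstoD)
  qed
  then obtain r where r: "r > 0"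
    "\<And>z b. dist z x < r \<Longrightarrow> b \<in> Basis \<Longrightarrow> dist (dirderiv g b z) (dirderiv g b x) < e'"
    unfolding eventually_nhds_metric by blast
  show "\<exists>d>0. \<forall>y. norm (y - x) < d \<longrightarrow>
     norm (g y - g x - (\<Sum>b\<in>Basis. ((y - x) \<bullet> b) *\<^sub>R dirderiv g b x)) \<le> e * norm (y - x)"
  proof (intro exI[of _ "r / real m"] conjI allI impI)
    show "r / real m > 0" using r m0 by simp
    fix y assume "norm (y - x) < r / real m"
    then have "real m * norm (y - x) < r" using m0 by (simp add: field_simps)
    moreover have "norm (dirderiv g b z - dirderiv g b x) \<le> e'" if "norm (z - x) < r" "b \<in> Basis" for z b
      using r(2)[of z b] that by (simp add: dist_norm)
    ultimately have "norm (g y - g x - (\<Sum>b\<in>Basis. ((y - x) \<bullet> b) *\<^sub>R dirderiv g b x)) \<le> 3 * e' * real m * norm (y - x)"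
      unfolding m_def using e' by (intro coordinate_walk_bound[OF bs diff]) auto
    then show "norm (g y - g x - (\<Sum>b\<in>Basis. ((y - x) \<bullet> b) *\<^sub>R dirderiv g b x)) \<le> e * norm (y - x)"
      using m0 by (simp add: e'_def)
  qed
qed

lemma iter_dirderiv_append: "iter_dirderiv g (vs @ ws) = iter_dirderiv (iter_dirderiv g ws) vs"
  by (induction vs) auto

lemma smooth_map_dirderiv: "smooth_map g \<Longrightarrow> smooth_map (dirderiv g b)"
proof -
  assume s: "smooth_map g"
  have e: "iter_dirderiv (dirderiv g b) vs = iter_dirderiv g (vs @ [b])" for vs
    by (simp add: iter_dirderiv_append)
  show ?thesis using s unfolding smooth_map_def e by blast
qed

lemma smooth_map_has_derivative:
  fixes g :: "'a::euclidean_space \<Rightarrow> 'b::real_normed_vector"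
  assumes "smooth_map g"
  shows "(g has_derivative (\<lambda>h. \<Sum>b\<in>Basis. (h \<bullet> b) *\<^sub>R dirderiv g b x)) (at x)"
proof (rule has_derivative_of_continuous_dirderiv)
  fix v
  show "continuous_on UNIV (dirderiv g v)"
    using assms unfolding smooth_map_def by (metis iter_dirderiv.simps)
next
  fix v y
  show "(\<lambda>t. g (y + t *\<^sub>R v)) differentiable at 0"
    using assms unfolding smooth_map_def by (metis iter_dirderiv.simps(1))
qed

lemma smooth_map_dirderiv_eq:
  fixes g :: "'a::euclidean_space \<Rightarrow> 'b::real_normed_vector"
  assumes "smooth_map g"
  shows "dirderiv g v x = (\<Sum>b\<in>Basis. (v \<bullet> b) *\<^sub>R dirderiv g b x)"
proof -
  let ?L = "\<lambda>h. \<Sum>b\<in>Basis. (h \<bullet> b) *\<^sub>R dirderiv g b x"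
  have l: "((\<lambda>t. x + t *\<^sub>R v) has_derivative (\<lambda>t. t *\<^sub>R v)) (at 0)"
    by (intro derivative_eq_intros) auto
  have "((\<lambda>t. g (x + t *\<^sub>R v)) has_derivative (\<lambda>t. ?L (t *\<^sub>R v))) (at 0)"
    using diff_chain_at[OF l, of g ?L] smooth_map_has_derivative[OF assms, of x] by (simp add: o_def)
  moreover have "?L (t *\<^sub>R v) = t *\<^sub>R ?L v" for t
    by (simp add: scaleR_sum_right)
  ultimately have "((\<lambda>t. g (x + t *\<^sub>R v)) has_vector_derivative ?L v) (at 0)"
    by (simp add: has_vector_derivative_def)
  then show ?thesis unfolding dirderiv_def by (rule vector_derivative_at)
qed

lemma dirderiv_sum_scaleR:
  fixes F :: "'i \<Rightarrow> 'a::real_normed_vector \<Rightarrow> 'b::real_normed_vector"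
  assumes "finite I" and d: "\<And>i. i \<in> I \<Longrightarrow> (\<lambda>t. F i (x + t *\<^sub>R v)) differentiable (at 0)"
  shows "dirderiv (\<lambda>y. \<Sum>i\<in>I. c i *\<^sub>R F i y) v x = (\<Sum>i\<in>I. c i *\<^sub>R dirderiv (F i) v x)"
proof -
  have "((\<lambda>t. F i (x + t *\<^sub>R v)) has_vector_derivative dirderiv (F i) v x) (at 0)" if "i \<in> I" for i
    using d[OF that] unfolding dirderiv_def by (simp add: vector_derivative_works)
  then have "((\<lambda>t. c i *\<^sub>R F i (x + t *\<^sub>R v)) has_vector_derivative c i *\<^sub>R dirderiv (F i) v x) (at 0)" if "i \<in> I" for i
    using that by (intro bounded_linear.has_vector_derivative[OF bounded_linear_scaleR_right])
  then have "((\<lambda>t. \<Sum>i\<in>I. c i *\<^sub>R F i (x + t *\<^sub>R v)) has_vector_derivative (\<Sum>i\<in>I. c i *\<^sub>R dirderiv (F i) v x)) (at 0)"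
    by (rule has_vector_derivative_sum)
  then show ?thesis unfolding dirderiv_def by (rule vector_derivative_at)
qed

lemma iter_dirderiv_sum_scaleR:
  fixes F :: "'i \<Rightarrow> 'a::euclidean_space \<Rightarrow> 'b::real_normed_vector"
  assumes "finite I" and s: "\<And>i. i \<in> I \<Longrightarrow> smooth_map (F i)"
  shows "iter_dirderiv (\<lambda>y. \<Sum>i\<in>I. c i *\<^sub>R F i y) vs = (\<lambda>y. \<Sum>i\<in>I. c i *\<^sub>R iter_dirderiv (F i) vs y)"
proof (induction vs)
  case Nil then show ?case by simp
next
  case (Cons v vs)
  have "iter_dirderiv (\<lambda>y. \<Sum>i\<in>I. c i *\<^sub>R F i y) (v#vs) = dirderiv (\<lambda>y. \<Sum>i\<in>I. c i *\<^sub>R iter_dirderiv (F i) vs y) v"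
    using Cons by simp
  also have "\<dots> = (\<lambda>y. \<Sum>i\<in>I. c i *\<^sub>R iter_dirderiv (F i) (v#vs) y)"
  proof
    fix y
    show "dirderiv (\<lambda>y. \<Sum>i\<in>I. c i *\<^sub>R iter_dirderiv (F i) vs y) v y = (\<Sum>i\<in>I. c i *\<^sub>R iter_dirderiv (F i) (v#vs) y)"
      using s assms(1) unfolding smooth_map_def by (subst dirderiv_sum_scaleR) auto
  qed
  finally show ?case .
qed

lemma continuous_bounded_on_unit_cball:
  fixes f :: "'a::euclidean_space \<Rightarrow> 'b::real_normed_vector"
  assumes "continuous_on UNIV f"
  shows "\<exists>M\<ge>0. \<forall>x. norm x \<le> 1 \<longrightarrow> norm (f x) \<le> M"
proof -
  have "compact (f ` cball 0 1)"
    by (rule compact_continuous_image[OF continuous_on_subset[OF assms]]) auto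
  then obtain M where "M > 0" "\<forall>y\<in>f ` cball 0 1. norm y \<le> M"
    using compact_imp_bounded bounded_pos by metis
  then show ?thesis by (intro exI[of _ M]) auto
qed

lemma smooth_map_iter_dirderiv_bound:
  fixes g :: "'a::euclidean_space \<Rightarrow> 'b::real_normed_vector"
  assumes "smooth_map g"
  shows "\<exists>M\<ge>0. \<forall>vs x. length vs = m \<longrightarrow> norm x \<le> 1 \<longrightarrow> norm (iter_dirderiv g vs x) \<le> M * prod_list (map norm vs)"
  using assms
proof (induction m arbitrary: g)
  case 0
  then have "continuous_on UNIV g" unfolding smooth_map_def by (metis iter_dirderiv.simps(1))
  then show ?case using continuous_bounded_on_unit_cball by fastforce
next
  case (Suc m)
  have "\<forall>b\<in>(Basis::'a set). \<exists>M\<ge>0. \<forall>vs x. length vs = m \<longrightarrow> norm x \<le> 1 \<longrightarrow>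
      norm (iter_dirderiv (dirderiv g b) vs x) \<le> M * prod_list (map norm vs)"
    using Suc.IH smooth_map_dirderiv[OF Suc.prems] by blast
  then obtain Mf where Mf: "\<And>b. b \<in> Basis \<Longrightarrow> Mf b \<ge> 0"
    "\<And>b vs x. b \<in> Basis \<Longrightarrow> length vs = m \<Longrightarrow> norm x \<le> 1 \<Longrightarrow>
      norm (iter_dirderiv (dirderiv g b) vs x) \<le> Mf b * prod_list (map norm vs)"
    by metis
  show ?case
  proof (intro exI[of _ "\<Sum>b\<in>Basis. Mf b"] conjI allI impI)
    show "0 \<le> (\<Sum>b\<in>Basis. Mf b)" using Mf(1) by (simp add: sum_nonneg)
  next
    fix vs :: "'a list" and x :: 'a
    assume len: "length vs = Suc m" and x: "norm x \<le> 1"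
    obtain ws v where vs: "vs = ws @ [v]" using len by (metis length_Suc_conv_rev)
    have lw: "length ws = m" using len vs by simp
    have "iter_dirderiv g vs = iter_dirderiv (dirderiv g v) ws"
      by (simp add: vs iter_dirderiv_append)
    also have "dirderiv g v = (\<lambda>y. \<Sum>b\<in>Basis. (v \<bullet> b) *\<^sub>R dirderiv g b y)"
      using smooth_map_dirderiv_eq[OF Suc.prems] by blast
    also have "iter_dirderiv (\<lambda>y. \<Sum>b\<in>Basis. (v \<bullet> b) *\<^sub>R dirderiv g b y) ws
        = (\<lambda>y. \<Sum>b\<in>Basis. (v \<bullet> b) *\<^sub>R iter_dirderiv (dirderiv g b) ws y)"
      by (rule iter_dirderiv_sum_scaleR) (auto intro: smooth_map_dirderiv[OF Suc.prems])
    finally have eq: "iter_dirderiv g vs = (\<lambda>y. \<Sum>b\<in>Basis. (v \<bullet> b) *\<^sub>R iter_dirderiv (dirderiv g b) ws y)" .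
    have "norm (iter_dirderiv g vs x) = norm (\<Sum>b\<in>Basis. (v \<bullet> b) *\<^sub>R iter_dirderiv (dirderiv g b) ws x)"
      by (simp add: eq)
    also have "\<dots> \<le> (\<Sum>b\<in>Basis. norm ((v \<bullet> b) *\<^sub>R iter_dirderiv (dirderiv g b) ws x))"
      by (rule norm_sum)
    also have "\<dots> \<le> (\<Sum>b\<in>Basis. norm v * (Mf b * prod_list (map norm ws)))"
    proof (intro sum_mono)
      fix b :: 'a assume b: "b \<in> Basis"
      show "norm ((v \<bullet> b) *\<^sub>R iter_dirderiv (dirderiv g b) ws x) \<le> norm v * (Mf b * prod_list (map norm ws))"
        unfolding norm_scaleR
        by (intro mult_mono Basis_le_norm b Mf(2) lw x) auto
    qed
    also have "\<dots> = (\<Sum>b\<in>Basis. Mf b) * prod_list (map norm vs)"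
      by (simp add: vs sum_distrib_left sum_distrib_right algebra_simps)
    finally show "norm (iter_dirderiv g vs x) \<le> (\<Sum>b\<in>Basis. Mf b) * prod_list (map norm vs)" .
  qed
qed

lemma taylor_poly_remainder_bound:
  fixes H :: "'a::euclidean_space \<Rightarrow> 'b::banach"
  assumes "smooth_map H"
  shows "\<exists>M\<ge>0. \<forall>x. norm x \<le> 1 \<longrightarrow> norm (H x - taylor_poly m H x) \<le> M * norm x ^ Suc m"
proof -
  obtain M where M: "M \<ge> 0" "\<And>vs x. length vs = Suc m \<Longrightarrow> norm x \<le> 1 \<Longrightarrow>
      norm (iter_dirderiv H vs x) \<le> M * prod_list (map norm vs)"
    using smooth_map_iter_dirderiv_bound[OF assms, of "Suc m"] by blast
  have diffs: "\<And>vs v y. (\<lambda>t. iter_dirderiv H vs (y + t *\<^sub>R v)) differentiable (at 0)"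
    using assms unfolding smooth_map_def by blast
  show ?thesis
  proof (intro exI[of _ M] conjI allI impI M(1))
    fix x :: 'a assume x: "norm x \<le> 1"
    define Df where "Df j t = iter_dirderiv H (replicate j x) (t *\<^sub>R x)" for j t
    have Df: "(Df j has_vector_derivative Df (Suc j) t) (at t within {0..1})" for j t
      using has_vector_derivative_along_line[OF diffs, of "replicate j x" 0 x t]
      unfolding Df_def by (simp add: has_vector_derivative_at_within)
    have Df0: "Df 0 = (\<lambda>t. H (t *\<^sub>R x))" by (simp add: Df_def fun_eq_iff)
    have "((\<lambda>t. ((1 - t) ^ (Suc m - 1) / fact (Suc m - 1)) *\<^sub>R Df (Suc m) t) has_integral
        (\<lambda>t. H (t *\<^sub>R x)) 1 - (\<Sum>j<Suc m. ((1 - 0) ^ j / fact j) *\<^sub>R Df j 0)) {0..1}"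
      by (rule Taylor_has_integral[OF _ Df0 Df]) simp_all
    then have integral: "((\<lambda>t. ((1 - t) ^ m / fact m) *\<^sub>R Df (Suc m) t) has_integral
        H x - taylor_poly m H x) (cbox 0 1)"
      by (simp add: taylor_poly_def Df_def lessThan_Suc_atMost cbox_interval)
    have "norm (((1 - t) ^ m / fact m) *\<^sub>R Df (Suc m) t) \<le> M * norm x ^ Suc m"
      if t: "t \<in> cbox 0 1" for t
    proof -
      have t01: "0 \<le> t" "t \<le> 1" using t by auto
      have "(1 - t) ^ m \<le> (1::real)" "0 \<le> (1 - t) ^ m" using t01 by (auto intro: power_le_one)
      then have weight: "\<bar>(1 - t) ^ m / fact m\<bar> \<le> (1::real)"
        using fact_ge_1[of m, where 'a=real] by (simp add: divide_le_eq_1 order_trans)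
      have "norm (t *\<^sub>R x) \<le> 1" using t01 x by (simp add: mult_le_one)
      then have "norm (Df (Suc m) t) \<le> M * norm x ^ Suc m"
        unfolding Df_def using M(2)[of "replicate (Suc m) x" "t *\<^sub>R x"] by (simp add: prod_list_replicate)
      then show ?thesis
        using mult_mono[OF weight] M(1) by (simp add: mult_le_one)
    qed
    then show "norm (H x - taylor_poly m H x) \<le> M * norm x ^ Suc m"
      using has_integral_bound[OF _ integral] M(1) by simp
  qed
qed

lemma has_derivative_zero_of_quadratic_bound:
  fixes f :: "'a::real_normed_vector \<Rightarrow> 'b::real_normed_vector"
  assumes M: "M \<ge> 0" "\<And>x. norm x \<le> 1 \<Longrightarrow> norm (f x) \<le> M * norm x ^ 2"
  shows "(f has_derivative (\<lambda>_. 0)) (at 0)"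
  unfolding has_derivative_at_alt
proof (intro conjI allI impI)
  show "bounded_linear (\<lambda>_. 0::'b)" by simp
next
  fix e :: real assume e: "e > 0"
  have f0: "f 0 = 0" using M(2)[of 0] by simp
  define d where "d = min 1 (e / (M + 1))"
  have d: "d > 0" using e M by (simp add: d_def)
  show "\<exists>d>0. \<forall>y. norm (y - 0) < d \<longrightarrow> norm (f y - f 0 - 0) \<le> e * norm (y - 0)"
  proof (intro exI[of _ d] conjI allI impI d)
    fix y :: 'a assume y: "norm (y - 0) < d"
    then have y1: "norm y \<le> 1" and y2: "norm y \<le> e / (M + 1)" by (auto simp: d_def)
    have "M * norm y \<le> M * (e / (M + 1))" using y2 M by (intro mult_left_mono) auto
    also have "\<dots> \<le> e" using M e by (simp add: field_simps)
    finally have "(M * norm y) * norm y \<le> e * norm y" by (intro mult_right_mono) auto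
    then show "norm (f y - f 0 - 0) \<le> e * norm (y - 0)"
      using M(2)[OF y1] by (simp add: f0 power2_eq_square mult.assoc)
  qed
qed

lemma has_derivative_vec_nthI:
  fixes f :: "'a::real_normed_vector \<Rightarrow> 'b::euclidean_space^'n"
  assumes "\<And>k. ((\<lambda>u. f u $ k) has_derivative (\<lambda>w. f' w $ k)) (at x within S)"
  shows "(f has_derivative f') (at x within S)"
proof -
  have "\<forall>i\<in>Basis. ((\<lambda>x. f x \<bullet> i) has_derivative (\<lambda>x. f' x \<bullet> i)) (at x within S)"
  proof
    fix i :: "'b^'n" assume "i \<in> Basis"
    then obtain k b where i: "i = axis k b" and b: "b \<in> Basis" by (auto simp: Basis_vec_def)
    have "((\<lambda>x. f x $ k \<bullet> b) has_derivative (\<lambda>x. f' x $ k \<bullet> b)) (at x within S)"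
      using assms[of k] by (intro derivative_intros) auto
    then show "((\<lambda>x. f x \<bullet> i) has_derivative (\<lambda>x. f' x \<bullet> i)) (at x within S)"
      using inner_axis[of _ k b] inner_commute[of b] by (simp add: i)
  qed
  then show ?thesis using has_derivative_componentwise_within by blast
qed

section \<open>Polynomial maps as term lists\<close>

text \<open>A factor
  \<open>(j, b)\<close> stands for \<open>z\<^sub>j\<close> if \<open>b = False\<close> and for \<open>conj z\<^sub>j\<close> if \<open>b = True\<close>; a monomial is a
  list of factors (its length is the degree), a term list a formal sum of monomials with
  coefficients, and a polynomial map has one term list per component. Unlike coefficient
  functions, term lists make substitution and differentiation structural recursions.\<close>

type_synonym 'n factor = "'n \<times> bool"
type_synonym 'n terms = "(complex \<times> 'n factor list) list"
type_synonym 'n pmap = "'n \<Rightarrow> 'n terms"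

definition factor_val :: "'n factor \<Rightarrow> complex^'n \<Rightarrow> complex" where
  "factor_val f u = (if snd f then cnj (u $ fst f) else u $ fst f)"

definition monomial_val :: "'n factor list \<Rightarrow> complex^'n \<Rightarrow> complex" where
  "monomial_val fs u = prod_list (map (\<lambda>f. factor_val f u) fs)"

fun monomial_deriv :: "'n factor list \<Rightarrow> complex^'n \<Rightarrow> complex^'n \<Rightarrow> complex" where
  "monomial_deriv [] u w = 0"
| "monomial_deriv (f#fs) u w = factor_val f w * monomial_val fs u + factor_val f u * monomial_deriv fs u w"

definition terms_val :: "'n terms \<Rightarrow> complex^'n \<Rightarrow> complex" where
  "terms_val L u = sum_list (map (\<lambda>(c,fs). c * monomial_val fs u) L)"

definition terms_deriv :: "'n terms \<Rightarrow> complex^'n \<Rightarrow> complex^'n \<Rightarrow> complex" where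
  "terms_deriv L u w = sum_list (map (\<lambda>(c,fs). c * monomial_deriv fs u w) L)"

definition pmap_val :: "'n pmap \<Rightarrow> complex^'n \<Rightarrow> complex^'n" where
  "pmap_val ts u = (\<chi> k. terms_val (ts k) u)"

definition pmap_deriv :: "'n pmap \<Rightarrow> complex^'n \<Rightarrow> complex^'n \<Rightarrow> complex^'n" where
  "pmap_deriv ts u w = (\<chi> k. terms_deriv (ts k) u w)"

lemma monomial_val_Nil[simp]: "monomial_val [] u = 1"
  and monomial_val_Cons[simp]: "monomial_val (f#fs) u = factor_val f u * monomial_val fs u"
  by (simp_all add: monomial_val_def)

lemma monomial_val_append[simp]: "monomial_val (fs @ gs) u = monomial_val fs u * monomial_val gs u"
  by (simp add: monomial_val_def)

lemma terms_val_Nil[simp]: "terms_val [] u = 0"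
  and terms_val_Cons[simp]: "terms_val ((c,fs)#L) u = c * monomial_val fs u + terms_val L u"
  and terms_val_append[simp]: "terms_val (L @ M) u = terms_val L u + terms_val M u"
  by (simp_all add: terms_val_def)

lemma terms_deriv_Nil[simp]: "terms_deriv [] u w = 0"
  and terms_deriv_Cons[simp]: "terms_deriv ((c,fs)#L) u w = c * monomial_deriv fs u w + terms_deriv L u w"
  and terms_deriv_append[simp]: "terms_deriv (L @ M) u w = terms_deriv L u w + terms_deriv M u w"
  by (simp_all add: terms_deriv_def)

lemma pmap_val_nth[simp]: "pmap_val ts u $ k = terms_val (ts k) u"
  by (simp add: pmap_val_def)

lemma pmap_deriv_nth[simp]: "pmap_deriv ts u w $ k = terms_deriv (ts k) u w"
  by (simp add: pmap_deriv_def)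

lemma bounded_linear_factor_val: "bounded_linear (factor_val f)"
proof (cases "snd f")
  case True
  then have "factor_val f = (\<lambda>u. cnj (u $ fst f))" by (auto simp: factor_val_def fun_eq_iff)
  then show ?thesis using bounded_linear_compose[OF bounded_linear_cnj bounded_linear_vec_nth] by simp
next
  case False
  then have "factor_val f = (\<lambda>u. u $ fst f)" by (auto simp: factor_val_def fun_eq_iff)
  then show ?thesis by (simp add: bounded_linear_vec_nth)
qed

lemma factor_val_norm: "cmod (factor_val f u) \<le> norm u"
  using Finite_Cartesian_Product.norm_nth_le[of u "fst f"] by (simp add: factor_val_def)

lemma factor_val_add: "factor_val f (u + v) = factor_val f u + factor_val f v"
  by (simp add: factor_val_def)

lemma monomial_val_has_derivative: "(monomial_val fs has_derivative monomial_deriv fs u) (at u within S)"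
proof (induction fs)
  case Nil
  then show ?case by (simp add: monomial_val_def)
next
  case (Cons f fs)
  have l: "(factor_val f has_derivative factor_val f) (at u within S)"
    by (rule bounded_linear.has_derivative[OF bounded_linear_factor_val has_derivative_ident])
  have "((\<lambda>u. factor_val f u * monomial_val fs u) has_derivative
      (\<lambda>w. factor_val f u * monomial_deriv fs u w + factor_val f w * monomial_val fs u)) (at u within S)"
    by (rule has_derivative_mult[OF l Cons.IH])
  then show ?case by (simp add: algebra_simps)
qed

lemma monomial_val_norm: "cmod (monomial_val fs u) \<le> norm u ^ length fs"
proof (induction fs)
  case Nil then show ?case by simp
next
  case (Cons f fs)
  have "cmod (monomial_val (f#fs) u) = cmod (factor_val f u) * cmod (monomial_val fs u)" by (simp add: norm_mult)
  also have "\<dots> \<le> norm u * norm u ^ length fs"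
    by (rule mult_mono[OF factor_val_norm Cons.IH]) auto
  finally show ?case by simp
qed

lemma monomial_deriv_norm: "cmod (monomial_deriv fs u w) \<le> real (length fs) * norm u ^ (length fs - 1) * norm w"
proof (induction fs)
  case Nil then show ?case by simp
next
  case (Cons f fs)
  have a: "cmod (factor_val f w * monomial_val fs u) \<le> norm w * norm u ^ length fs"
    unfolding norm_mult by (rule mult_mono[OF factor_val_norm monomial_val_norm]) auto
  have b: "cmod (factor_val f u * monomial_deriv fs u w) \<le> norm u * (real (length fs) * norm u ^ (length fs - 1) * norm w)"
    unfolding norm_mult by (rule mult_mono[OF factor_val_norm Cons.IH]) auto
  have c: "norm u * (real (length fs) * norm u ^ (length fs - 1) * norm w) = real (length fs) * norm u ^ length fs * norm w"
    by (cases "length fs") auto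
  have "cmod (monomial_deriv (f#fs) u w) \<le> cmod (factor_val f w * monomial_val fs u) + cmod (factor_val f u * monomial_deriv fs u w)"
    by (simp add: norm_triangle_ineq)
  also have "\<dots> \<le> norm w * norm u ^ length fs + norm u * (real (length fs) * norm u ^ (length fs - 1) * norm w)"
    using a b by linarith
  also have "\<dots> = norm w * norm u ^ length fs + real (length fs) * norm u ^ length fs * norm w"
    using c by simp
  finally have "cmod (monomial_deriv (f#fs) u w) \<le> norm w * norm u ^ length fs + real (length fs) * norm u ^ length fs * norm w" .
  then show ?case by (simp add: algebra_simps)
qed

lemma terms_val_has_derivative: "(terms_val L has_derivative terms_deriv L u) (at u within S)"
proof (induction L)
  case Nil then show ?case by (simp add: terms_val_def terms_deriv_def)
next
  case (Cons p L)
  obtain c fs where p: "p = (c,fs)" by (cases p)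
  have "((\<lambda>u. c * monomial_val fs u + terms_val L u) has_derivative (\<lambda>w. c * monomial_deriv fs u w + terms_deriv L u w)) (at u within S)"
    by (intro has_derivative_add has_derivative_mult_right monomial_val_has_derivative Cons.IH)
  then show ?case by (simp add: p)
qed

lemma pmap_val_has_derivative: "(pmap_val ts has_derivative pmap_deriv ts u) (at u within S)"
  by (rule has_derivative_vec_nthI) (simp add: terms_val_has_derivative)

lemma linear_pmap_deriv: "linear (pmap_deriv ts u)"
  using has_derivative_linear[OF pmap_val_has_derivative] .

definition coeff_norm :: "'n terms \<Rightarrow> real" where
  "coeff_norm L = sum_list (map (\<lambda>(c,fs). cmod c) L)"
definition coeff_deg_norm :: "'n terms \<Rightarrow> real" where
  "coeff_deg_norm L = sum_list (map (\<lambda>(c,fs). cmod c * real (length fs)) L)"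

lemma coeff_norm_Nil[simp]: "coeff_norm [] = 0"
  and coeff_norm_Cons[simp]: "coeff_norm ((c,fs)#L) = cmod c + coeff_norm L"
  by (simp_all add: coeff_norm_def)

lemma coeff_deg_norm_Nil[simp]: "coeff_deg_norm [] = 0"
  and coeff_deg_norm_Cons[simp]: "coeff_deg_norm ((c,fs)#L) = cmod c * real (length fs) + coeff_deg_norm L"
  by (simp_all add: coeff_deg_norm_def)

lemma coeff_norm_nonneg: "coeff_norm L \<ge> 0"
  by (induction L) (auto simp: coeff_norm_def)

lemma coeff_deg_norm_nonneg: "coeff_deg_norm L \<ge> 0"
  by (induction L) (auto simp: coeff_deg_norm_def)

lemma terms_val_bound:
  assumes "\<forall>(c,fs)\<in>set L. length fs \<ge> d" and "norm u \<le> 1"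
  shows "cmod (terms_val L u) \<le> coeff_norm L * norm u ^ d"
  using assms(1)
proof (induction L)
  case Nil then show ?case by simp
next
  case (Cons p L)
  obtain c fs where p: "p = (c,fs)" by (cases p)
  have "norm u ^ length fs \<le> norm u ^ d"
    using Cons.prems p assms(2) by (intro power_decreasing) auto
  then have "cmod (c * monomial_val fs u) \<le> cmod c * norm u ^ d"
    unfolding norm_mult by (intro mult_left_mono order_trans[OF monomial_val_norm]) auto
  moreover have "cmod (terms_val L u) \<le> coeff_norm L * norm u ^ d" using Cons by auto
  moreover have "cmod (terms_val (p#L) u) \<le> cmod (c * monomial_val fs u) + cmod (terms_val L u)"
    by (simp add: p norm_triangle_ineq)
  ultimately show ?case
    by (simp add: p distrib_right)
qed

lemma terms_deriv_bound:
  assumes "\<forall>(c,fs)\<in>set L. length fs \<ge> 2" and "norm u \<le> 1"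
  shows "cmod (terms_deriv L u w) \<le> coeff_deg_norm L * norm u * norm w"
  using assms(1)
proof (induction L)
  case Nil then show ?case by simp
next
  case (Cons p L)
  obtain c fs where p: "p = (c,fs)" by (cases p)
  have "norm u ^ (length fs - 1) \<le> norm u ^ 1"
    using Cons.prems p assms(2) by (intro power_decreasing) auto
  then have "real (length fs) * norm u ^ (length fs - 1) * norm w \<le> real (length fs) * norm u * norm w"
    by (intro mult_right_mono mult_left_mono) auto
  then have "cmod (monomial_deriv fs u w) \<le> real (length fs) * norm u * norm w"
    using monomial_deriv_norm[of fs u w] by linarith
  then have "cmod (c * monomial_deriv fs u w) \<le> cmod c * (real (length fs) * norm u * norm w)"
    unfolding norm_mult by (intro mult_left_mono) auto
  moreover have "cmod (terms_deriv L u w) \<le> coeff_deg_norm L * norm u * norm w" using Cons by auto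
  moreover have "cmod (terms_deriv (p#L) u w) \<le> cmod (c * monomial_deriv fs u w) + cmod (terms_deriv L u w)"
    by (simp add: p norm_triangle_ineq)
  ultimately show ?case
    by (simp add: p distrib_right)
qed

lemma norm_vec_le_sum: "norm (x::'a::real_normed_vector^'n) \<le> (\<Sum>k\<in>UNIV. norm (x $ k))"
  unfolding norm_vec_def by (rule L2_set_le_sum) simp

definition pmap_coeff_norm :: "'n::finite pmap \<Rightarrow> real" where
  "pmap_coeff_norm P = (\<Sum>k\<in>UNIV. coeff_norm (P k))"

definition pmap_coeff_deg_norm :: "'n::finite pmap \<Rightarrow> real" where
  "pmap_coeff_deg_norm P = (\<Sum>k\<in>UNIV. coeff_deg_norm (P k))"

lemma pmap_coeff_norm_nonneg: "pmap_coeff_norm P \<ge> 0"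
  by (simp add: pmap_coeff_norm_def sum_nonneg coeff_norm_nonneg)

lemma pmap_coeff_deg_norm_nonneg: "pmap_coeff_deg_norm P \<ge> 0"
  by (simp add: pmap_coeff_deg_norm_def sum_nonneg coeff_deg_norm_nonneg)

lemma pmap_val_bound:
  assumes "\<forall>k. \<forall>(c,fs)\<in>set (ts k). length fs \<ge> d" and "norm u \<le> 1"
  shows "norm (pmap_val ts u) \<le> pmap_coeff_norm ts * norm u ^ d"
proof -
  have "norm (pmap_val ts u) \<le> (\<Sum>k\<in>UNIV. cmod (terms_val (ts k) u))"
    using norm_vec_le_sum[of "pmap_val ts u"] by simp
  also have "\<dots> \<le> (\<Sum>k\<in>UNIV. coeff_norm (ts k) * norm u ^ d)"
    using assms by (intro sum_mono terms_val_bound) auto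
  finally show ?thesis by (simp add: sum_distrib_right pmap_coeff_norm_def)
qed

lemma pmap_deriv_bound:
  assumes "\<forall>k. \<forall>(c,fs)\<in>set (ts k). length fs \<ge> 2" and "norm u \<le> 1"
  shows "norm (pmap_deriv ts u w) \<le> pmap_coeff_deg_norm ts * norm u * norm w"
proof -
  have "norm (pmap_deriv ts u w) \<le> (\<Sum>k\<in>UNIV. cmod (terms_deriv (ts k) u w))"
    using norm_vec_le_sum[of "pmap_deriv ts u w"] by simp
  also have "\<dots> \<le> (\<Sum>k\<in>UNIV. coeff_deg_norm (ts k) * norm u * norm w)"
    using assms by (intro sum_mono terms_deriv_bound) auto
  finally show ?thesis by (simp add: sum_distrib_right pmap_coeff_deg_norm_def)
qed

lemma terms_val_map_cons: "terms_val (map (\<lambda>(c,gs). (c, f#gs)) L) u = factor_val f u * terms_val L u"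
  by (induction L) (auto simp: algebra_simps)

lemma terms_val_map_app: "terms_val (map (\<lambda>(c,gs). (c, gs @ fs)) L) u = terms_val L u * monomial_val fs u"
  by (induction L) (auto simp: algebra_simps)

lemma terms_val_map_scale: "terms_val (map (\<lambda>(c',gs). (c * c', gs)) L) u = c * terms_val L u"
  by (induction L) (auto simp: algebra_simps)

lemma terms_val_filter: "terms_val L u = terms_val (filter P L) u + terms_val (filter (\<lambda>x. \<not> P x) L) u"
  by (induction L) auto

lemma terms_deriv_eq_terms_val:
  assumes "\<And>fs. monomial_deriv fs u w = terms_val (g fs) u"
  shows "terms_deriv L u w = terms_val (concat (map (\<lambda>(c,fs). map (\<lambda>(c',gs). (c * c', gs)) (g fs)) L)) u"
  by (induction L) (auto simp: assms terms_val_map_scale)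

definition conj_factor :: "'n factor \<Rightarrow> 'n factor" where "conj_factor f = (fst f, \<not> snd f)"

lemma factor_val_conj_factor: "factor_val (conj_factor f) u = cnj (factor_val f u)"
  by (simp add: factor_val_def conj_factor_def)

lemma monomial_val_conj_factors: "monomial_val (map conj_factor fs) u = cnj (monomial_val fs u)"
  by (induction fs) (auto simp: factor_val_conj_factor)

definition conj_terms :: "'n terms \<Rightarrow> 'n terms" where
  "conj_terms L = map (\<lambda>(c,gs). (cnj c, map conj_factor gs)) L"

lemma terms_val_conj_terms: "terms_val (conj_terms L) u = cnj (terms_val L u)"
  by (induction L) (auto simp: conj_terms_def monomial_val_conj_factors)

text \<open>The frequency of a monomial is the imaginary part of its eigenvalue under the linear
  flow \<open>z\<^sub>j \<mapsto> e\<^bsup>\<gamma>\<^sub>j t\<^esup> z\<^sub>j\<close>: the factor \<open>z\<^sub>j\<close> contributes \<open>\<omega>\<^sub>j\<close> and \<open>conj z\<^sub>j\<close> contributes \<open>-\<omega>\<^sub>j\<close>.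
  The \<open>k\<close>-th non-resonance condition of a monomial says its frequency differs from \<open>\<omega>\<^sub>k\<close>.\<close>

definition frequency :: "('n \<Rightarrow> real) \<Rightarrow> 'n factor list \<Rightarrow> real" where
  "frequency \<omega> fs = sum_list (map (\<lambda>f. if snd f then - \<omega> (fst f) else \<omega> (fst f)) fs)"

lemma frequency_Nil[simp]: "frequency \<omega> [] = 0"
  and frequency_Cons[simp]: "frequency \<omega> (f#fs) = (if snd f then - \<omega> (fst f) else \<omega> (fst f)) + frequency \<omega> fs"
  and frequency_append[simp]: "frequency \<omega> (fs @ gs) = frequency \<omega> fs + frequency \<omega> gs"
  by (simp_all add: frequency_def)

lemma frequency_conj_factors[simp]: "frequency \<omega> (map conj_factor fs) = - frequency \<omega> fs"
  by (induction fs) (auto simp: conj_factor_def)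

definition nonresonant_deg_ge :: "('n \<Rightarrow> real) \<Rightarrow> nat \<Rightarrow> 'n pmap \<Rightarrow> bool" where
  "nonresonant_deg_ge \<omega> d P \<longleftrightarrow> (\<forall>k. \<forall>(c,fs)\<in>set (P k). length fs \<ge> d \<and> frequency \<omega> fs \<noteq> \<omega> k)"

definition factor_subst_terms :: "'n factor \<Rightarrow> 'n pmap \<Rightarrow> 'n terms" where
  "factor_subst_terms f P = (if snd f then conj_terms (P (fst f)) else P (fst f))"

lemma factor_val_pmap_val: "factor_val f (pmap_val P u) = terms_val (factor_subst_terms f P) u"
  by (simp add: factor_val_def factor_subst_terms_def terms_val_conj_terms)

fun monomial_deriv_subst_terms :: "'n factor list \<Rightarrow> 'n pmap \<Rightarrow> 'n terms" where
  "monomial_deriv_subst_terms [] P = []"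
| "monomial_deriv_subst_terms (f#fs) P = map (\<lambda>(c,gs). (c, gs @ fs)) (factor_subst_terms f P) @ map (\<lambda>(c,gs). (c, f#gs)) (monomial_deriv_subst_terms fs P)"

lemma monomial_deriv_pmap_val:
  "monomial_deriv fs u (pmap_val P u) = terms_val (monomial_deriv_subst_terms fs P) u"
  by (induction fs) (auto simp: factor_val_pmap_val terms_val_map_app terms_val_map_cons algebra_simps)

lemma factor_subst_terms_degree:
  "(c, gs) \<in> set (factor_subst_terms f P) \<Longrightarrow> \<exists>c' hs. (c', hs) \<in> set (P (fst f)) \<and> length gs = length hs"
  by (force simp: factor_subst_terms_def conj_terms_def split: if_splits)

lemma monomial_deriv_subst_terms_degree:
  assumes "\<forall>k. \<forall>(c,gs)\<in>set (P k). length gs \<ge> 2"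
  shows "(c,gs) \<in> set (monomial_deriv_subst_terms fs P) \<Longrightarrow> length gs \<ge> length fs + 1"
proof (induction fs arbitrary: c gs)
  case Nil then show ?case by simp
next
  case (Cons f fs)
  from Cons.prems consider (a) gs' where "(c,gs') \<in> set (factor_subst_terms f P)" "gs = gs' @ fs"
    | (b) gs' where "(c,gs') \<in> set (monomial_deriv_subst_terms fs P)" "gs = f # gs'"
    by auto
  then show ?case
  proof cases
    case a
    then have "length gs' \<ge> 2"
      using factor_subst_terms_degree[OF a(1)] assms by fastforce
    then show ?thesis using a by simp
  next
    case b
    then show ?thesis using Cons.IH[of c gs'] by simp
  qed
qed

definition monomial_remainder :: "'n factor list \<Rightarrow> complex^'n \<Rightarrow> complex^'n \<Rightarrow> complex" where
  "monomial_remainder fs u w = monomial_val fs (u + w) - monomial_val fs u - monomial_deriv fs u w"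

lemma monomial_remainder_Cons: "monomial_remainder (f#fs) u w
    = (factor_val f u + factor_val f w) * monomial_remainder fs u w + factor_val f w * monomial_deriv fs u w"
  by (simp add: monomial_remainder_def factor_val_add algebra_simps)

lemma monomial_remainder_linear: "length fs \<le> 1 \<Longrightarrow> monomial_remainder fs u w = 0"
  by (cases fs) (auto simp: monomial_remainder_def factor_val_add)

lemma monomial_remainder_bound:
  assumes uw: "norm u + norm w \<le> 1"
  shows "cmod (monomial_remainder fs u w) \<le> real (length fs)^2 * (norm w)^2"
proof (induction fs)
  case Nil then show ?case by (simp add: monomial_remainder_def)
next
  case (Cons f fs)
  let ?n = "length fs"
  have "norm u \<le> 1" using uw norm_ge_zero[of w] by linarith
  then have u1: "norm u ^ (?n - 1) \<le> 1" by (intro power_le_one) auto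
  have "cmod (factor_val f u + factor_val f w) \<le> 1"
    using norm_triangle_ineq[of "factor_val f u" "factor_val f w"] factor_val_norm[of f u] factor_val_norm[of f w] uw
    by linarith
  then have "cmod ((factor_val f u + factor_val f w) * monomial_remainder fs u w) \<le> 1 * (real ?n ^ 2 * (norm w)^2)"
    unfolding norm_mult by (intro mult_mono Cons.IH) auto
  moreover have "cmod (factor_val f w * monomial_deriv fs u w) \<le> norm w * (real ?n * 1 * norm w)"
    unfolding norm_mult using u1
    by (intro mult_mono factor_val_norm order_trans[OF monomial_deriv_norm] mult_right_mono mult_left_mono) auto
  ultimately have "cmod (monomial_remainder (f#fs) u w) \<le> (real ?n ^ 2 + real ?n) * (norm w)^2"
    unfolding monomial_remainder_Cons
    using norm_triangle_ineq[of "(factor_val f u + factor_val f w) * monomial_remainder fs u w" "factor_val f w * monomial_deriv fs u w"]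
    by (simp add: power2_eq_square algebra_simps)
  also have "\<dots> \<le> real (length (f#fs))^2 * (norm w)^2"
    by (intro mult_right_mono) (auto simp: power2_eq_square algebra_simps)
  finally show ?case .
qed

definition terms_remainder :: "'n terms \<Rightarrow> complex^'n \<Rightarrow> complex^'n \<Rightarrow> complex" where
  "terms_remainder L u w = sum_list (map (\<lambda>(c,fs). c * monomial_remainder fs u w) L)"

lemma terms_val_add: "terms_val L (u + w) = terms_val L u + terms_deriv L u w + terms_remainder L u w"
  by (induction L) (auto simp: terms_remainder_def monomial_remainder_def algebra_simps)

definition coeff_deg2_norm :: "'n terms \<Rightarrow> real" where
  "coeff_deg2_norm L = sum_list (map (\<lambda>(c,fs). cmod c * real (length fs)^2) L)"

lemma terms_remainder_bound:
  assumes "norm u + norm w \<le> 1"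
  shows "cmod (terms_remainder L u w) \<le> coeff_deg2_norm L * (norm w)^2"
proof (induction L)
  case Nil then show ?case by (simp add: terms_remainder_def coeff_deg2_norm_def)
next
  case (Cons p L)
  obtain c fs where p: "p = (c,fs)" by (cases p)
  have "cmod (c * monomial_remainder fs u w) \<le> cmod c * (real (length fs)^2 * (norm w)^2)"
    unfolding norm_mult by (intro mult_left_mono monomial_remainder_bound assms) auto
  moreover have "cmod (terms_remainder (p#L) u w) \<le> cmod (c * monomial_remainder fs u w) + cmod (terms_remainder L u w)"
    by (simp add: p terms_remainder_def norm_triangle_ineq)
  ultimately show ?case using Cons by (simp add: p coeff_deg2_norm_def distrib_right)
qed

definition pmap_remainder :: "'n pmap \<Rightarrow> complex^'n \<Rightarrow> complex^'n \<Rightarrow> complex^'n" where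
  "pmap_remainder P u w = (\<chi> k. terms_remainder (P k) u w)"

definition pmap_coeff_deg2_norm :: "'n::finite pmap \<Rightarrow> real" where
  "pmap_coeff_deg2_norm P = (\<Sum>k\<in>UNIV. coeff_deg2_norm (P k))"

lemma pmap_val_add: "pmap_val P (u + w) = pmap_val P u + pmap_deriv P u w + pmap_remainder P u w"
  by (simp add: vec_eq_iff pmap_remainder_def terms_val_add)

lemma coeff_deg2_norm_nonneg: "coeff_deg2_norm L \<ge> 0"
  by (induction L) (auto simp: coeff_deg2_norm_def)

lemma pmap_coeff_deg2_norm_nonneg: "pmap_coeff_deg2_norm P \<ge> 0"
  by (simp add: pmap_coeff_deg2_norm_def sum_nonneg coeff_deg2_norm_nonneg)

lemma pmap_remainder_bound:
  assumes "norm u + norm w \<le> 1"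
  shows "norm (pmap_remainder P u w) \<le> pmap_coeff_deg2_norm P * (norm w)^2"
proof -
  have "norm (pmap_remainder P u w) \<le> (\<Sum>k\<in>UNIV. cmod (terms_remainder (P k) u w))"
    using norm_vec_le_sum[of "pmap_remainder P u w"] by (simp add: pmap_remainder_def)
  also have "\<dots> \<le> (\<Sum>k\<in>UNIV. coeff_deg2_norm (P k) * (norm w)^2)"
    using assms by (intro sum_mono terms_remainder_bound)
  finally show ?thesis by (simp add: sum_distrib_right pmap_coeff_deg2_norm_def)
qed

lemma pmap_val_affine:
  fixes P :: "'n::finite pmap"
  assumes "\<forall>k. \<forall>(c,fs)\<in>set (P k). length fs \<le> 1"
  shows "pmap_val P (u + w) = pmap_val P u + pmap_deriv P u w"
proof -
  have "terms_remainder L u w = 0" if "\<forall>(c,fs)\<in>set L. length fs \<le> 1" for L :: "'n terms"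
    using that by (induction L) (auto simp: terms_remainder_def monomial_remainder_linear)
  then have "pmap_remainder P u w = 0"
    using assms by (simp add: pmap_remainder_def vec_eq_iff)
  then show ?thesis by (simp add: pmap_val_add)
qed

lemma pmap_val_affine_vanishes:
  assumes "\<forall>k. \<forall>(c,fs)\<in>set (P k). length fs \<le> 1"
    and "(pmap_val P has_derivative (\<lambda>_. 0)) (at 0)" and "pmap_val P 0 = 0"
  shows "pmap_val P x = 0"
proof -
  have "pmap_deriv P 0 = (\<lambda>_. 0)"
    by (rule has_derivative_unique[OF pmap_val_has_derivative assms(2)])
  then show ?thesis
    using pmap_val_affine[OF assms(1), of 0 x] assms(3) by simp
qed

lemma pmap_val_append: "pmap_val (\<lambda>k. A k @ B k) u = pmap_val A u + pmap_val B u"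
  by (simp add: vec_eq_iff)

lemma pmap_deriv_append: "pmap_deriv (\<lambda>k. A k @ B k) u w = pmap_deriv A u w + pmap_deriv B u w"
  by (simp add: vec_eq_iff)

lemma pmap_val_filter:
  "pmap_val P u = pmap_val (\<lambda>k. filter Q (P k)) u + pmap_val (\<lambda>k. filter (\<lambda>x. \<not> Q x) (P k)) u"
  by (simp add: vec_eq_iff terms_val_filter[of "P _" u Q])

definition z_exponents :: "'n factor list \<Rightarrow> 'n \<Rightarrow> nat" where
  "z_exponents gs j = length (filter (\<lambda>f. f = (j,False)) gs)"

definition zbar_exponents :: "'n factor list \<Rightarrow> 'n \<Rightarrow> nat" where
  "zbar_exponents gs j = length (filter (\<lambda>f. f = (j,True)) gs)"

lemma zzbar_monomial_add_z:
  "zzbar_monomial (\<lambda>i. (if i = j then 1 else 0) + s i) t u = u $ j * zzbar_monomial s t u"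
proof -
  have "zzbar_monomial (\<lambda>i. (if i = j then 1 else 0) + s i) t u
      = (\<Prod>i\<in>UNIV. (if i = j then u $ i else 1) * ((u $ i) ^ s i * cnj (u $ i) ^ t i))"
    unfolding zzbar_monomial_def by (intro prod.cong) (auto simp: power_add)
  also have "\<dots> = (\<Prod>i\<in>UNIV. (if i = j then u $ i else 1)) * zzbar_monomial s t u"
    unfolding zzbar_monomial_def prod.distrib ..
  also have "(\<Prod>i\<in>UNIV. (if i = j then u $ i else 1)) = u $ j"
    by (simp add: prod.delta)
  finally show ?thesis .
qed

lemma zzbar_monomial_add_zbar:
  "zzbar_monomial s (\<lambda>i. (if i = j then 1 else 0) + t i) u = cnj (u $ j) * zzbar_monomial s t u"
proof -
  have "zzbar_monomial s (\<lambda>i. (if i = j then 1 else 0) + t i) u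
      = (\<Prod>i\<in>UNIV. (if i = j then cnj (u $ i) else 1) * ((u $ i) ^ s i * cnj (u $ i) ^ t i))"
    unfolding zzbar_monomial_def by (intro prod.cong) (auto simp: power_add)
  also have "\<dots> = (\<Prod>i\<in>UNIV. (if i = j then cnj (u $ i) else 1)) * zzbar_monomial s t u"
    unfolding zzbar_monomial_def prod.distrib ..
  also have "(\<Prod>i\<in>UNIV. (if i = j then cnj (u $ i) else 1)) = cnj (u $ j)"
    by (simp add: prod.delta)
  finally show ?thesis .
qed

lemma monomial_val_eq_zzbar_monomial:
  "monomial_val gs u = zzbar_monomial (z_exponents gs) (zbar_exponents gs) u"
proof (induction gs)
  case Nil
  then show ?case by (simp add: zzbar_monomial_def z_exponents_def zbar_exponents_def)
next
  case (Cons f gs)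
  obtain j b where f: "f = (j,b)" by (cases f)
  show ?case
  proof (cases b)
    case True
    have "zbar_exponents (f#gs) = (\<lambda>i. (if i = j then 1 else 0) + zbar_exponents gs i)" "z_exponents (f#gs) = z_exponents gs"
      by (auto simp: zbar_exponents_def z_exponents_def f True fun_eq_iff)
    then show ?thesis using Cons by (simp add: zzbar_monomial_add_zbar f True factor_val_def)
  next
    case False
    have "z_exponents (f#gs) = (\<lambda>i. (if i = j then 1 else 0) + z_exponents gs i)" "zbar_exponents (f#gs) = zbar_exponents gs"
      by (auto simp: zbar_exponents_def z_exponents_def f False fun_eq_iff)
    then show ?thesis using Cons by (simp add: zzbar_monomial_add_z f False factor_val_def)
  qed
qed

lemma monomial_degree_exponents: "monomial_degree (z_exponents gs) (zbar_exponents gs) = length gs"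
proof (induction gs)
  case Nil then show ?case by (simp add: monomial_degree_def z_exponents_def zbar_exponents_def)
next
  case (Cons f gs)
  obtain j b where f: "f = (j,b)" by (cases f)
  have "monomial_degree (z_exponents (f#gs)) (zbar_exponents (f#gs))
     = (\<Sum>i\<in>UNIV. (if i = j then 1 else 0) + (z_exponents gs i + zbar_exponents gs i))"
    unfolding monomial_degree_def by (intro sum.cong) (auto simp: z_exponents_def zbar_exponents_def f)
  also have "\<dots> = 1 + monomial_degree (z_exponents gs) (zbar_exponents gs)"
    by (simp add: sum.distrib monomial_degree_def)
  finally show ?case using Cons by simp
qed

definition zzbar_coeffs :: "'n terms \<Rightarrow> ('n \<Rightarrow> nat) \<times> ('n \<Rightarrow> nat) \<Rightarrow> complex" where
  "zzbar_coeffs L p = sum_list (map (\<lambda>(c,gs). if (z_exponents gs, zbar_exponents gs) = p then c else 0) L)"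

lemma zzbar_coeffs_nonzero: "zzbar_coeffs L p \<noteq> 0 \<Longrightarrow> \<exists>c gs. (c,gs) \<in> set L \<and> (z_exponents gs, zbar_exponents gs) = p"
proof (induction L)
  case Nil then show ?case by (simp add: zzbar_coeffs_def)
next
  case (Cons x L)
  obtain c gs where x: "x = (c,gs)" by (cases x)
  show ?case
  proof (cases "(z_exponents gs, zbar_exponents gs) = p")
    case True then show ?thesis using x by auto
  next
    case False
    then have "zzbar_coeffs L p \<noteq> 0" using Cons.prems by (simp add: zzbar_coeffs_def x)
    then show ?thesis using Cons.IH by auto
  qed
qed

lemma sum_zzbar_coeffs:
  assumes "finite S" "(\<lambda>(c,gs). (z_exponents gs, zbar_exponents gs)) ` set L \<subseteq> S"
  shows "(\<Sum>p\<in>S. zzbar_coeffs L p * zzbar_monomial (fst p) (snd p) u) = terms_val L u"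
  using assms(2)
proof (induction L)
  case Nil then show ?case by (simp add: zzbar_coeffs_def)
next
  case (Cons x L)
  obtain c gs where x: "x = (c,gs)" by (cases x)
  have mem: "(z_exponents gs, zbar_exponents gs) \<in> S" using Cons.prems x by auto
  have "(\<Sum>p\<in>S. zzbar_coeffs (x#L) p * zzbar_monomial (fst p) (snd p) u)
      = (\<Sum>p\<in>S. (if (z_exponents gs, zbar_exponents gs) = p then c * zzbar_monomial (fst p) (snd p) u else 0))
        + (\<Sum>p\<in>S. zzbar_coeffs L p * zzbar_monomial (fst p) (snd p) u)"
    unfolding sum.distrib[symmetric] by (intro sum.cong) (auto simp: zzbar_coeffs_def x distrib_right)
  also have "(\<Sum>p\<in>S. (if (z_exponents gs, zbar_exponents gs) = p then c * zzbar_monomial (fst p) (snd p) u else 0))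
      = c * monomial_val gs u"
    using mem assms(1) by (simp add: sum.delta monomial_val_eq_zzbar_monomial)
  finally show ?case using Cons x by simp
qed

lemma zzbar_poly_superset:
  assumes "finite S" "{p. c p \<noteq> 0} \<subseteq> S"
  shows "zzbar_poly c z = (\<Sum>p\<in>S. c p * zzbar_monomial (fst p) (snd p) z)"
  unfolding zzbar_poly_def using assms by (intro sum.mono_neutral_left) auto

lemma zzbar_coeffs_repr: "is_zzbar_poly_repr (zzbar_coeffs L) (terms_val L)"
proof -
  let ?S = "(\<lambda>(c,gs). (z_exponents gs, zbar_exponents gs)) ` set L"
  have sub: "{p. zzbar_coeffs L p \<noteq> 0} \<subseteq> ?S"
    using zzbar_coeffs_nonzero by fastforce
  have fin: "finite ?S" by simp
  show ?thesis
    unfolding is_zzbar_poly_repr_def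
    using finite_subset[OF sub fin] zzbar_poly_superset[OF fin sub] sum_zzbar_coeffs[OF fin] by auto
qed

lemma zzbar_coeffs_degree:
  assumes "\<forall>(c,gs)\<in>set L. length gs \<ge> d" "zzbar_coeffs L (s,t) \<noteq> 0"
  shows "monomial_degree s t \<ge> d"
proof -
  obtain c gs where "(c,gs) \<in> set L" "(z_exponents gs, zbar_exponents gs) = (s,t)" using zzbar_coeffs_nonzero[OF assms(2)] by blast
  then show ?thesis using assms(1) monomial_degree_exponents[of gs] by auto
qed

definition monomial_factors :: "'n list \<Rightarrow> ('n \<Rightarrow> nat) \<Rightarrow> ('n \<Rightarrow> nat) \<Rightarrow> 'n factor list" where
  "monomial_factors js s t = concat (map (\<lambda>j. replicate (s j) (j,False) @ replicate (t j) (j,True)) js)"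

lemma monomial_val_concat: "monomial_val (concat Ls) u = prod_list (map (\<lambda>L. monomial_val L u) Ls)"
  by (induction Ls) auto

lemma monomial_val_replicate: "monomial_val (replicate m f) u = factor_val f u ^ m"
  by (induction m) auto

lemma monomial_val_monomial_factors:
  fixes js :: "'n::finite list"
  assumes "distinct js" "set js = UNIV"
  shows "monomial_val (monomial_factors js s t) u = zzbar_monomial s t u"
proof -
  have "monomial_val (monomial_factors js s t) u = prod_list (map (\<lambda>j. (u $ j) ^ s j * cnj (u $ j) ^ t j) js)"
    unfolding monomial_factors_def monomial_val_concat by (simp add: o_def monomial_val_replicate factor_val_def)
  also have "\<dots> = (\<Prod>j\<in>UNIV. (u $ j) ^ s j * cnj (u $ j) ^ t j)"
    using assms prod.distinct_set_conv_list[of js "\<lambda>j. (u $ j) ^ s j * cnj (u $ j) ^ t j"] by simp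
  finally show ?thesis by (simp add: zzbar_monomial_def)
qed

lemma frequency_replicate: "frequency \<omega> (replicate m f) = real m * (if snd f then - \<omega> (fst f) else \<omega> (fst f))"
  by (induction m) (auto simp: algebra_simps)

lemma frequency_monomial_factors:
  fixes js :: "'n::finite list"
  assumes "distinct js" "set js = UNIV"
  shows "frequency \<omega> (monomial_factors js s t) = (\<Sum>j\<in>UNIV. real (s j) * \<omega> j) - (\<Sum>j\<in>UNIV. real (t j) * \<omega> j)"
proof -
  have c: "frequency \<omega> (concat Ls) = sum_list (map (frequency \<omega>) Ls)" for Ls
    by (induction Ls) auto
  have "frequency \<omega> (monomial_factors js s t) = sum_list (map (\<lambda>j. real (s j) * \<omega> j - real (t j) * \<omega> j) js)"
    unfolding monomial_factors_def c by (simp add: o_def frequency_replicate)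
  also have "\<dots> = (\<Sum>j\<in>UNIV. real (s j) * \<omega> j - real (t j) * \<omega> j)"
    using assms by (simp add: sum_list_distinct_conv_sum_set)
  finally show ?thesis by (simp add: sum_subtractf)
qed

lemma terms_of_zzbar_repr:
  fixes c :: "('n::finite \<Rightarrow> nat) \<times> ('n \<Rightarrow> nat) \<Rightarrow> complex"
  assumes "is_zzbar_poly_repr c f"
  shows "\<exists>L. (\<forall>z. f z = terms_val L z) \<and> (\<forall>a gs. (a,gs) \<in> set L \<longrightarrow>
     (\<exists>s t. c (s,t) \<noteq> 0 \<and> (\<forall>\<omega> k. monomial_nonres \<omega> k s t \<longleftrightarrow> frequency \<omega> gs \<noteq> \<omega> k)))"
proof -
  have fin: "finite {p. c p \<noteq> 0}" and fz: "\<And>z. f z = zzbar_poly c z"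
    using assms by (auto simp: is_zzbar_poly_repr_def)
  obtain ps where ps: "distinct ps" "set ps = {p. c p \<noteq> 0}" using finite_distinct_list[OF fin] by blast
  obtain js :: "'n list" where js: "distinct js" "set js = UNIV" using finite_distinct_list[of "UNIV :: 'n set"] by auto
  define L where "L = map (\<lambda>p. (c p, monomial_factors js (fst p) (snd p))) ps"
  show ?thesis
  proof (intro exI[of _ L] conjI allI impI)
    fix z
    have "terms_val L z = sum_list (map (\<lambda>p. c p * zzbar_monomial (fst p) (snd p) z) ps)"
      by (simp add: L_def terms_val_def o_def monomial_val_monomial_factors[OF js] case_prod_beta)
    also have "\<dots> = (\<Sum>p\<in>{p. c p \<noteq> 0}. c p * zzbar_monomial (fst p) (snd p) z)"
      using ps by (simp add: sum_list_distinct_conv_sum_set)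
    finally show "f z = terms_val L z" by (simp add: fz zzbar_poly_def)
  next
    fix a gs assume "(a,gs) \<in> set L"
    then obtain p where "p \<in> set ps" "gs = monomial_factors js (fst p) (snd p)" by (auto simp: L_def)
    then show "\<exists>s t. c (s,t) \<noteq> 0 \<and> (\<forall>\<omega> k. monomial_nonres \<omega> k s t \<longleftrightarrow> frequency \<omega> gs \<noteq> \<omega> k)"
      using ps frequency_monomial_factors[OF js]
      by (intro exI[of _ "fst p"] exI[of _ "snd p"]) (auto simp: monomial_nonres_def)
  qed
qed

fun monomial_deriv_terms :: "'n factor list \<Rightarrow> complex^'n \<Rightarrow> 'n terms" where
  "monomial_deriv_terms [] v = []"
| "monomial_deriv_terms (f#fs) v = (factor_val f v, fs) # map (\<lambda>(c,gs). (c, f#gs)) (monomial_deriv_terms fs v)"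

lemma monomial_deriv_eq_terms_val: "monomial_deriv fs x v = terms_val (monomial_deriv_terms fs v) x"
  by (induction fs) (auto simp: terms_val_map_cons)

definition pmap_deriv_terms :: "'n pmap \<Rightarrow> complex^'n \<Rightarrow> 'n \<Rightarrow> 'n terms" where
  "pmap_deriv_terms Q v k = concat (map (\<lambda>(c,fs). map (\<lambda>(c',gs). (c * c', gs)) (monomial_deriv_terms fs v)) (Q k))"

lemma pmap_deriv_eq_pmap_val: "pmap_deriv Q x v = pmap_val (pmap_deriv_terms Q v) x"
  by (simp add: vec_eq_iff pmap_deriv_terms_def terms_deriv_eq_terms_val[OF monomial_deriv_eq_terms_val])

lemma pmap_val_has_vector_derivative_along_line: "((\<lambda>t. pmap_val Q (x + t *\<^sub>R v)) has_vector_derivative pmap_deriv Q (x + s *\<^sub>R v) v) (at s)"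
proof -
  have l: "((\<lambda>t. x + t *\<^sub>R v) has_derivative (\<lambda>t. t *\<^sub>R v)) (at s)"
    by (intro derivative_eq_intros) auto
  have "((\<lambda>t. pmap_val Q (x + t *\<^sub>R v)) has_derivative (\<lambda>t. pmap_deriv Q (x + s *\<^sub>R v) (t *\<^sub>R v))) (at s)"
    using diff_chain_at[OF l pmap_val_has_derivative] by (simp add: o_def)
  moreover have "pmap_deriv Q (x + s *\<^sub>R v) (t *\<^sub>R v) = t *\<^sub>R pmap_deriv Q (x + s *\<^sub>R v) v" for t
    using linear_pmap_deriv linear_scale by blast
  ultimately show ?thesis by (simp add: has_vector_derivative_def)
qed

lemma dirderiv_pmap_val: "dirderiv (pmap_val Q) v x = pmap_deriv Q x v"
  unfolding dirderiv_def using vector_derivative_at[OF pmap_val_has_vector_derivative_along_line[of Q x v 0]] by simp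

fun iter_pmap_deriv_terms :: "'n pmap \<Rightarrow> (complex^'n) list \<Rightarrow> 'n \<Rightarrow> 'n terms" where
  "iter_pmap_deriv_terms Q [] = Q"
| "iter_pmap_deriv_terms Q (v#vs) = pmap_deriv_terms (iter_pmap_deriv_terms Q vs) v"

lemma iter_dirderiv_pmap_val: "iter_dirderiv (pmap_val Q) vs = pmap_val (iter_pmap_deriv_terms Q vs)"
proof (induction vs)
  case Nil then show ?case by simp
next
  case (Cons v vs)
  have "iter_dirderiv (pmap_val Q) (v#vs) = dirderiv (pmap_val (iter_pmap_deriv_terms Q vs)) v" using Cons by simp
  then show ?case by (simp add: fun_eq_iff dirderiv_pmap_val pmap_deriv_eq_pmap_val)
qed

lemma smooth_map_pmap_val: "smooth_map (pmap_val Q)"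
  unfolding smooth_map_def iter_dirderiv_pmap_val
proof (intro conjI allI)
  fix vs
  show "continuous_on UNIV (pmap_val (iter_pmap_deriv_terms Q vs))"
    by (intro continuous_at_imp_continuous_on ballI has_derivative_continuous[OF pmap_val_has_derivative])
next
  fix vs v x
  show "(\<lambda>t. pmap_val (iter_pmap_deriv_terms Q vs) (x + t *\<^sub>R v)) differentiable at 0"
    using pmap_val_has_vector_derivative_along_line[of "iter_pmap_deriv_terms Q vs" x v 0]
    by (auto simp: differentiable_def has_vector_derivative_def)
qed

section \<open>The linear and the cubic part of the field\<close>

definition linear_field :: "('n \<Rightarrow> complex) \<Rightarrow> complex^'n \<Rightarrow> complex^'n" where
  "linear_field \<gamma> u = (\<chi> k. \<gamma> k * u $ k)"

definition factor_eigenvalue :: "('n \<Rightarrow> complex) \<Rightarrow> 'n factor \<Rightarrow> complex" where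
  "factor_eigenvalue \<gamma> f = (if snd f then cnj (\<gamma> (fst f)) else \<gamma> (fst f))"

lemma factor_val_linear_field: "factor_val f (linear_field \<gamma> u) = factor_eigenvalue \<gamma> f * factor_val f u"
  by (simp add: factor_val_def linear_field_def factor_eigenvalue_def)

lemma monomial_deriv_linear_field: "monomial_deriv fs u (linear_field \<gamma> u) = sum_list (map (factor_eigenvalue \<gamma>) fs) * monomial_val fs u"
  by (induction fs) (auto simp: factor_val_linear_field algebra_simps)

definition small_divisor :: "('n \<Rightarrow> complex) \<Rightarrow> 'n factor list \<Rightarrow> 'n \<Rightarrow> complex" where
  "small_divisor \<gamma> fs k = sum_list (map (factor_eigenvalue \<gamma>) fs) - \<gamma> k"

lemma Im_small_divisor:
  assumes "\<And>k. \<gamma> k = Complex lam (\<omega> k)"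
  shows "Im (small_divisor \<gamma> fs k) = frequency \<omega> fs - \<omega> k"
proof -
  have "Im (sum_list (map (factor_eigenvalue \<gamma>) fs)) = frequency \<omega> fs"
    by (induction fs) (auto simp: factor_eigenvalue_def assms)
  then show ?thesis by (simp add: small_divisor_def assms)
qed

definition homological_terms :: "('n \<Rightarrow> complex) \<Rightarrow> 'n \<Rightarrow> 'n terms \<Rightarrow> 'n terms" where
  "homological_terms \<gamma> k L = map (\<lambda>(c,fs). (c / small_divisor \<gamma> fs k, fs)) L"

lemma homological_terms_solves:
  assumes "\<forall>(c,fs)\<in>set L. small_divisor \<gamma> fs k \<noteq> 0"
  shows "terms_deriv (homological_terms \<gamma> k L) u (linear_field \<gamma> u)
    = \<gamma> k * terms_val (homological_terms \<gamma> k L) u + terms_val L u"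
  using assms
proof (induction L)
  case Nil then show ?case by (simp add: homological_terms_def)
next
  case (Cons p L)
  obtain c fs where p: "p = (c,fs)" by (cases p)
  have "small_divisor \<gamma> fs k \<noteq> 0" using Cons.prems p by auto
  then have "c / small_divisor \<gamma> fs k * monomial_deriv fs u (linear_field \<gamma> u)
      = \<gamma> k * (c / small_divisor \<gamma> fs k * monomial_val fs u) + c * monomial_val fs u"
    by (simp add: monomial_deriv_linear_field small_divisor_def field_simps)
  with Cons show ?case by (simp add: homological_terms_def p algebra_simps)
qed

definition cubic_field :: "('n \<Rightarrow> complex) \<Rightarrow> complex^'n \<Rightarrow> complex^'n" where
  "cubic_field \<beta> u = (\<chi> k. - \<beta> k * u $ k * complex_of_real ((cmod (u $ k))\<^sup>2))"

lemma of_real_cmod_power2: "(complex_of_real (cmod z))\<^sup>2 = z * cnj z"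
  using complex_norm_square[of z] by simp

definition cubic_factor_coeff :: "('n \<Rightarrow> complex) \<Rightarrow> 'n factor \<Rightarrow> complex" where
  "cubic_factor_coeff \<beta> f = (if snd f then - cnj (\<beta> (fst f)) else - \<beta> (fst f))"

lemma factor_val_cubic_field:
  "factor_val f (cubic_field \<beta> u) = cubic_factor_coeff \<beta> f * monomial_val [(fst f, False), (fst f, True)] u * factor_val f u"
  by (auto simp: factor_val_def cubic_field_def cubic_factor_coeff_def complex_norm_square of_real_cmod_power2)

fun monomial_cubic_deriv_terms :: "('n \<Rightarrow> complex) \<Rightarrow> 'n factor list \<Rightarrow> 'n terms" where
  "monomial_cubic_deriv_terms \<beta> [] = []"
| "monomial_cubic_deriv_terms \<beta> (f#fs) = (cubic_factor_coeff \<beta> f, (fst f, False) # (fst f, True) # f # fs)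
     # map (\<lambda>(c,gs). (c, f#gs)) (monomial_cubic_deriv_terms \<beta> fs)"

lemma monomial_deriv_cubic_field:
  "monomial_deriv fs u (cubic_field \<beta> u) = terms_val (monomial_cubic_deriv_terms \<beta> fs) u"
  by (induction fs) (auto simp: factor_val_cubic_field terms_val_map_cons algebra_simps)

lemma monomial_cubic_deriv_terms_degree_frequency:
  "(c,gs) \<in> set (monomial_cubic_deriv_terms \<beta> fs) \<Longrightarrow> length gs = length fs + 2 \<and> frequency \<omega> gs = frequency \<omega> fs"
  by (induction fs arbitrary: c gs) auto

definition cubic_field_deriv :: "('n \<Rightarrow> complex) \<Rightarrow> complex^'n \<Rightarrow> complex^'n \<Rightarrow> complex^'n" where
  "cubic_field_deriv \<beta> u w = (\<chi> k. - \<beta> k * (2 * u $ k * cnj (u $ k) * w $ k + u $ k * u $ k * cnj (w $ k)))"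

definition cubic_field_deriv_terms :: "('n \<Rightarrow> complex) \<Rightarrow> 'n terms \<Rightarrow> 'n \<Rightarrow> 'n terms" where
  "cubic_field_deriv_terms \<beta> L k = map (\<lambda>(c,fs). (-2 * \<beta> k * c, (k,False)#(k,True)#fs)) L
     @ map (\<lambda>(c,fs). (- \<beta> k * cnj c, (k,False)#(k,False)#map conj_factor fs)) L"

lemma terms_val_cubic_field_deriv_terms: "terms_val (cubic_field_deriv_terms \<beta> L k) u
    = - \<beta> k * (2 * u $ k * cnj (u $ k) * terms_val L u + u $ k * u $ k * cnj (terms_val L u))"
proof -
  have a: "terms_val (map (\<lambda>(c,fs). (-2 * \<beta> k * c, (k,False)#(k,True)#fs)) L) u = -2 * \<beta> k * u $ k * cnj (u $ k) * terms_val L u"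
    by (induction L) (auto simp: factor_val_def algebra_simps)
  have b: "terms_val (map (\<lambda>(c,fs). (- \<beta> k * cnj c, (k,False)#(k,False)#map conj_factor fs)) L) u = - \<beta> k * u $ k * u $ k * cnj (terms_val L u)"
    by (induction L) (auto simp: factor_val_def monomial_val_conj_factors algebra_simps)
  show ?thesis unfolding cubic_field_deriv_terms_def terms_val_append a b by (simp add: algebra_simps)
qed

definition neg_terms :: "'n terms \<Rightarrow> 'n terms" where
  "neg_terms L = map (\<lambda>(c,gs). (- c, gs)) L"

lemma terms_val_neg_terms[simp]: "terms_val (neg_terms L) u = - terms_val L u"
  by (induction L) (auto simp: neg_terms_def)

definition bracket_terms :: "('n \<Rightarrow> complex) \<Rightarrow> 'n pmap \<Rightarrow> 'n \<Rightarrow> 'n terms" where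
  "bracket_terms \<beta> P k = concat (map (\<lambda>(c,fs). map (\<lambda>(c',gs). (c * c', gs)) (monomial_cubic_deriv_terms \<beta> fs)) (P k))
     @ neg_terms (cubic_field_deriv_terms \<beta> (P k) k)"

lemma pmap_deriv_cubic_field:
  "pmap_deriv P u (cubic_field \<beta> u) = cubic_field_deriv \<beta> u (pmap_val P u) + pmap_val (bracket_terms \<beta> P) u"
proof -
  have "terms_deriv (P k) u (cubic_field \<beta> u)
      = terms_val (concat (map (\<lambda>(c,fs). map (\<lambda>(c',gs). (c * c', gs)) (monomial_cubic_deriv_terms \<beta> fs)) (P k))) u" for k
    by (rule terms_deriv_eq_terms_val[OF monomial_deriv_cubic_field])
  then show ?thesis
    by (simp add: vec_eq_iff bracket_terms_def terms_val_cubic_field_deriv_terms cubic_field_deriv_def)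
qed

text \<open>The bracket multiplies a monomial \<open>M\<close> by \<open>|z\<^sub>j|\<^sup>2\<close>, of frequency 0, or, in component \<open>k\<close>,
  replaces it by \<open>z\<^sub>k\<^sup>2 conj M\<close>, of frequency \<open>2\<omega>\<^sub>k - freq M\<close>: either way the \<open>k\<close>-th non-resonance
  condition survives.\<close>

lemma nonresonant_deg_ge_bracket_terms:
  assumes "nonresonant_deg_ge \<omega> d P"
  shows "nonresonant_deg_ge \<omega> (d+2) (bracket_terms \<beta> P)"
  unfolding nonresonant_deg_ge_def
proof (intro allI ballI, clarify)
  fix k c gs assume "(c, gs) \<in> set (bracket_terms \<beta> P k)"
  then consider (a) c0 fs c' where "(c0,fs) \<in> set (P k)" "(c',gs) \<in> set (monomial_cubic_deriv_terms \<beta> fs)"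
    | (b) c0 fs where "(c0,fs) \<in> set (P k)" "gs = (k,False)#(k,True)#fs"
    | (c) c0 fs where "(c0,fs) \<in> set (P k)" "gs = (k,False)#(k,False)#map conj_factor fs"
    by (auto simp: bracket_terms_def neg_terms_def cubic_field_deriv_terms_def)
  then show "d + 2 \<le> length gs \<and> frequency \<omega> gs \<noteq> \<omega> k"
  proof cases
    case a
    then show ?thesis
      using assms monomial_cubic_deriv_terms_degree_frequency[OF a(2), of \<omega>] unfolding nonresonant_deg_ge_def by fastforce
  next
    case b
    then show ?thesis using assms unfolding nonresonant_deg_ge_def by fastforce
  next
    case c
    then show ?thesis using assms unfolding nonresonant_deg_ge_def by fastforce
  qed
qed

lemma linear_field_add: "linear_field \<gamma> (u + v) = linear_field \<gamma> u + linear_field \<gamma> v"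
  by (simp add: linear_field_def vec_eq_iff algebra_simps)

lemma linear_field_scaleR: "linear_field \<gamma> (a *\<^sub>R v) = a *\<^sub>R linear_field \<gamma> v"
  apply (simp only: linear_field_def vec_eq_iff vector_scaleR_component vec_lambda_beta)
  apply (simp add: scaleR_conv_of_real algebra_simps)
  done

lemma cubic_field_deriv_add: "cubic_field_deriv \<beta> u (a + b) = cubic_field_deriv \<beta> u a + cubic_field_deriv \<beta> u b"
  by (simp add: cubic_field_deriv_def vec_eq_iff algebra_simps)

definition cubic_field_second_order :: "('n::finite \<Rightarrow> complex) \<Rightarrow> complex^'n \<Rightarrow> complex^'n \<Rightarrow> complex^'n" where
  "cubic_field_second_order \<beta> u p = (\<chi> k. - \<beta> k * (2 * u $ k * p $ k * cnj (p $ k) + p $ k * p $ k * cnj (u $ k)))"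

lemma cubic_field_expand:
  "cubic_field \<beta> (u + a *\<^sub>R p) = cubic_field \<beta> u + a *\<^sub>R cubic_field_deriv \<beta> u p
    + (a^2) *\<^sub>R cubic_field_second_order \<beta> u p + (a^3) *\<^sub>R cubic_field \<beta> p" (is "_ = ?rhs")
proof -
  have "cubic_field \<beta> (u + a *\<^sub>R p) $ k = ?rhs $ k" for k
  proof -
    have e: "(u + a *\<^sub>R p) $ k = u $ k + of_real a * p $ k"
      by (simp only: vector_add_component vector_scaleR_component) (simp add: scaleR_conv_of_real)
    show ?thesis
      apply (simp only: vector_add_component vector_scaleR_component cubic_field_def cubic_field_deriv_def cubic_field_second_order_def vec_lambda_beta e)
      apply (simp only: complex_norm_square)
      apply (simp add: scaleR_conv_of_real algebra_simps power2_eq_square power3_eq_cube)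
      done
  qed
  then show ?thesis by (simp add: vec_eq_iff)
qed

lemma cubic_field_second_order_bound: "norm (cubic_field_second_order \<beta> u p) \<le> 3 * (\<Sum>k\<in>UNIV. cmod (\<beta> k)) * norm u * (norm p)^2"
proof -
  have c: "cmod (cubic_field_second_order \<beta> u p $ k) \<le> cmod (\<beta> k) * (3 * norm u * (norm p)^2)" for k
  proof -
    have uk: "cmod (u $ k) \<le> norm u" and pk: "cmod (p $ k) \<le> norm p"
      by (simp_all add: Finite_Cartesian_Product.norm_nth_le)
    have "cmod (2 * u $ k * p $ k * cnj (p $ k) + p $ k * p $ k * cnj (u $ k))
        \<le> 2 * cmod (u $ k) * cmod (p $ k) * cmod (p $ k) + cmod (p $ k) * cmod (p $ k) * cmod (u $ k)"
      by (rule order_trans[OF norm_triangle_ineq]) (simp add: norm_mult)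
    also have "\<dots> \<le> 2 * norm u * norm p * norm p + norm p * norm p * norm u"
      using uk pk by (intro add_mono mult_mono) auto
    also have "\<dots> = 3 * norm u * (norm p)^2" by (simp add: power2_eq_square algebra_simps)
    finally have i: "cmod (2 * u $ k * p $ k * cnj (p $ k) + p $ k * p $ k * cnj (u $ k)) \<le> 3 * norm u * (norm p)^2" .
    have "cmod (cubic_field_second_order \<beta> u p $ k) = cmod (\<beta> k) * cmod (2 * u $ k * p $ k * cnj (p $ k) + p $ k * p $ k * cnj (u $ k))"
      by (simp add: cubic_field_second_order_def norm_mult)
    also have "\<dots> \<le> cmod (\<beta> k) * (3 * norm u * (norm p)^2)" using i by (intro mult_left_mono) auto
    finally show ?thesis .
  qed
  have "norm (cubic_field_second_order \<beta> u p) \<le> (\<Sum>k\<in>UNIV. cmod (cubic_field_second_order \<beta> u p $ k))" by (rule norm_vec_le_sum)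
  also have "\<dots> \<le> (\<Sum>k\<in>UNIV. cmod (\<beta> k) * (3 * norm u * (norm p)^2))" by (intro sum_mono c)
  also have "\<dots> = (\<Sum>k\<in>UNIV. cmod (\<beta> k)) * (3 * norm u * (norm p)^2)" by (rule sum_distrib_right[symmetric])
  finally show ?thesis by (simp add: algebra_simps)
qed

lemma cubic_field_bound: "norm (cubic_field \<beta> p) \<le> (\<Sum>k\<in>UNIV. cmod (\<beta> k)) * (norm p)^3"
proof -
  have c: "cmod (cubic_field \<beta> p $ k) \<le> cmod (\<beta> k) * (norm p)^3" for k
  proof -
    have pk: "cmod (p $ k) \<le> norm p" by (simp add: Finite_Cartesian_Product.norm_nth_le)
    have "cmod (cubic_field \<beta> p $ k) = cmod (\<beta> k) * cmod (p $ k) ^ 3"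
      by (simp add: cubic_field_def norm_mult power3_eq_cube power2_eq_square)
    also have "\<dots> \<le> cmod (\<beta> k) * (norm p)^3" using pk by (intro mult_left_mono power_mono) auto
    finally show ?thesis .
  qed
  have "norm (cubic_field \<beta> p) \<le> (\<Sum>k\<in>UNIV. cmod (cubic_field \<beta> p $ k))" by (rule norm_vec_le_sum)
  also have "\<dots> \<le> (\<Sum>k\<in>UNIV. cmod (\<beta> k) * (norm p)^3)" by (intro sum_mono c)
  finally show ?thesis by (simp add: sum_distrib_right)
qed

lemma coupled_field_split: "coupled_field \<gamma> \<beta> H a x = linear_field \<gamma> x + cubic_field \<beta> x + a *\<^sub>R H x"
proof -
  have "coupled_field \<gamma> \<beta> H a x $ k = (linear_field \<gamma> x + cubic_field \<beta> x + a *\<^sub>R H x) $ k" for k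
    apply (simp only: coupled_field_def linear_field_def cubic_field_def vec_lambda_beta vector_add_component vector_scaleR_component)
    apply (simp add: scaleR_conv_of_real)
    done
  then show ?thesis by (simp add: vec_eq_iff)
qed

lemma nonresonant_deg_ge_homological_terms: "nonresonant_deg_ge \<omega> d L \<Longrightarrow> nonresonant_deg_ge \<omega> d (\<lambda>k. homological_terms \<gamma> k (L k))"
  unfolding nonresonant_deg_ge_def by (fastforce simp: homological_terms_def)

lemma nonresonant_deg_ge_neg_terms: "nonresonant_deg_ge \<omega> d L \<Longrightarrow> nonresonant_deg_ge \<omega> d (\<lambda>k. neg_terms (L k))"
  unfolding nonresonant_deg_ge_def by (fastforce simp: neg_terms_def)

lemma nonresonant_deg_ge_filter: "nonresonant_deg_ge \<omega> d L \<Longrightarrow> nonresonant_deg_ge \<omega> d (\<lambda>k. filter Q (L k))"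
  unfolding nonresonant_deg_ge_def by auto

lemma nonresonant_deg_ge_append: "nonresonant_deg_ge \<omega> d A \<Longrightarrow> nonresonant_deg_ge \<omega> d B \<Longrightarrow> nonresonant_deg_ge \<omega> d (\<lambda>k. A k @ B k)"
  unfolding nonresonant_deg_ge_def by auto

lemma nonresonant_deg_ge_mono: "nonresonant_deg_ge \<omega> d A \<Longrightarrow> d' \<le> d \<Longrightarrow> nonresonant_deg_ge \<omega> d' A"
  unfolding nonresonant_deg_ge_def by fastforce

lemma nonresonant_deg_ge_degree: "nonresonant_deg_ge \<omega> d A \<Longrightarrow> \<forall>k. \<forall>(c,fs)\<in>set (A k). length fs \<ge> d"
  unfolding nonresonant_deg_ge_def by fastforce

lemma nonresonant_deg_ge_small_divisor:
  assumes "\<And>k. \<gamma> k = Complex lam (\<omega> k)" "nonresonant_deg_ge \<omega> d A"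
  shows "\<forall>(c,fs)\<in>set (A k). small_divisor \<gamma> fs k \<noteq> 0"
proof (clarify)
  fix c fs assume "(c,fs) \<in> set (A k)" "small_divisor \<gamma> fs k = 0"
  then have "Im (small_divisor \<gamma> fs k) = 0" by simp
  then have "frequency \<omega> fs = \<omega> k" using Im_small_divisor[of \<gamma> lam \<omega> fs k] assms(1) by simp
  then show False using assms(2) \<open>(c,fs) \<in> set (A k)\<close> unfolding nonresonant_deg_ge_def by fastforce
qed

lemma homological_equation:
  assumes "\<And>k. \<gamma> k = Complex lam (\<omega> k)" "nonresonant_deg_ge \<omega> d A"
  shows "pmap_deriv (\<lambda>k. homological_terms \<gamma> k (A k)) u (linear_field \<gamma> u)
    = linear_field \<gamma> (pmap_val (\<lambda>k. homological_terms \<gamma> k (A k)) u) + pmap_val A u"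
proof -
  have "terms_deriv (homological_terms \<gamma> k (A k)) u (linear_field \<gamma> u)
      = \<gamma> k * terms_val (homological_terms \<gamma> k (A k)) u + terms_val (A k) u" for k
    by (rule homological_terms_solves[OF nonresonant_deg_ge_small_divisor[OF assms]])
  then show ?thesis by (simp add: vec_eq_iff linear_field_def)
qed

section \<open>The normal form transformation\<close>

definition subst_deriv_terms :: "'n pmap \<Rightarrow> 'n pmap \<Rightarrow> 'n pmap" where
  "subst_deriv_terms T P = (\<lambda>k. concat (map (\<lambda>(c,fs). map (\<lambda>(c',gs). (c * c', gs)) (monomial_deriv_subst_terms fs P)) (T k)))"

lemma pmap_deriv_pmap_val: "pmap_deriv T u (pmap_val P u) = pmap_val (subst_deriv_terms T P) u"
  by (simp add: vec_eq_iff subst_deriv_terms_def terms_deriv_eq_terms_val[OF monomial_deriv_pmap_val])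

lemma subst_deriv_terms_degree:
  assumes "\<forall>k. \<forall>(c,fs)\<in>set (T k). 2 \<le> length fs" and "\<forall>k. \<forall>(c,fs)\<in>set (P k). 2 \<le> length fs"
  shows "\<forall>k. \<forall>(c,gs)\<in>set (subst_deriv_terms T P k). 3 \<le> length gs"
proof (intro allI ballI, clarify)
  fix k a gs assume "(a,gs) \<in> set (subst_deriv_terms T P k)"
  then obtain c fs c' where "(c,fs) \<in> set (T k)" "(c',gs) \<in> set (monomial_deriv_subst_terms fs P)"
    by (auto simp: subst_deriv_terms_def)
  then show "3 \<le> length gs"
    using assms monomial_deriv_subst_terms_degree[OF assms(2)] by fastforce
qed

text \<open>\<open>P\<^sub>1\<close> solves the homological equation \<open>DP\<^sub>1 \<cdot> Au - AP\<^sub>1 = T\<close>; the second part removes the terms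
  of degree 4 and 5 of the bracket of \<open>P\<^sub>1\<close> with the cubic part, leaving a defect of degree \<open>\<ge> 6\<close>.\<close>

definition first_order_transform :: "('n \<Rightarrow> complex) \<Rightarrow> 'n pmap \<Rightarrow> 'n pmap" where
  "first_order_transform \<gamma> T = (\<lambda>k. homological_terms \<gamma> k (T k))"

definition normal_form_transform :: "('n \<Rightarrow> complex) \<Rightarrow> ('n \<Rightarrow> complex) \<Rightarrow> 'n pmap \<Rightarrow> 'n pmap" where
  "normal_form_transform \<gamma> \<beta> T = (\<lambda>k. first_order_transform \<gamma> T k @
     homological_terms \<gamma> k (neg_terms (filter (\<lambda>(c,gs). length gs \<le> 5)
       (bracket_terms \<beta> (first_order_transform \<gamma> T) k))))"

text \<open>Minus the terms of degree 3 and 4 of \<open>DT \<cdot> P\<close>: this is \<open>G\<close>, the \<open>\<alpha>\<^sup>2\<close>-part of the normal form.\<close>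

definition normal_form_cubic :: "('n \<Rightarrow> complex) \<Rightarrow> ('n \<Rightarrow> complex) \<Rightarrow> 'n pmap \<Rightarrow> 'n pmap" where
  "normal_form_cubic \<gamma> \<beta> T =
     (\<lambda>k. neg_terms (filter (\<lambda>(c,gs). length gs \<le> 4) (subst_deriv_terms T (normal_form_transform \<gamma> \<beta> T) k)))"

lemma nonresonant_normal_form_transform:
  assumes "nonresonant_deg_ge \<omega> 2 T"
  shows "nonresonant_deg_ge \<omega> 2 (normal_form_transform \<gamma> \<beta> T)"
proof -
  have P1: "nonresonant_deg_ge \<omega> 2 (first_order_transform \<gamma> T)"
    unfolding first_order_transform_def by (rule nonresonant_deg_ge_homological_terms[OF assms])
  have "nonresonant_deg_ge \<omega> 4 (\<lambda>k. homological_terms \<gamma> k (neg_terms (filter (\<lambda>(c,gs). length gs \<le> 5)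
      (bracket_terms \<beta> (first_order_transform \<gamma> T) k))))"
    using nonresonant_deg_ge_bracket_terms[OF P1, of \<beta>]
    by (intro nonresonant_deg_ge_homological_terms nonresonant_deg_ge_neg_terms nonresonant_deg_ge_filter) simp
  then show ?thesis
    unfolding normal_form_transform_def
    by (rule nonresonant_deg_ge_append[OF P1 nonresonant_deg_ge_mono]) simp
qed

lemma normal_form_transform_homological:
  fixes T :: "'n::finite pmap" and \<beta> :: "'n \<Rightarrow> complex"
  assumes \<gamma>: "\<And>k. \<gamma> k = Complex lam (\<omega> k)" and T: "nonresonant_deg_ge \<omega> 2 T"
  defines "P \<equiv> normal_form_transform \<gamma> \<beta> T"
  obtains B where "\<forall>k. \<forall>(c,gs)\<in>set (B k). 6 \<le> length gs"
    and "\<And>u. pmap_deriv P u (linear_field \<gamma> u + cubic_field \<beta> u)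
            = linear_field \<gamma> (pmap_val P u) + cubic_field_deriv \<beta> u (pmap_val P u) + pmap_val T u + pmap_val B u"
proof -
  define P1 where "P1 = first_order_transform \<gamma> T"
  define W where "W = bracket_terms \<beta> P1"
  define Wlo where "Wlo = (\<lambda>k. neg_terms (filter (\<lambda>(c,gs). length gs \<le> 5) (W k)))"
  define P2 where "P2 = (\<lambda>k. homological_terms \<gamma> k (Wlo k))"
  have P: "P = (\<lambda>k. P1 k @ P2 k)"
    by (simp add: P_def P1_def P2_def Wlo_def W_def normal_form_transform_def)
  have nP1: "nonresonant_deg_ge \<omega> 2 P1"
    unfolding P1_def first_order_transform_def by (rule nonresonant_deg_ge_homological_terms[OF T])
  have nW: "nonresonant_deg_ge \<omega> 4 W"
    using nonresonant_deg_ge_bracket_terms[OF nP1] by (simp add: W_def)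
  have nWlo: "nonresonant_deg_ge \<omega> 4 Wlo"
    unfolding Wlo_def by (intro nonresonant_deg_ge_neg_terms nonresonant_deg_ge_filter nW)
  have nP2: "nonresonant_deg_ge \<omega> 4 P2"
    unfolding P2_def by (rule nonresonant_deg_ge_homological_terms[OF nWlo])
  define B where "B = (\<lambda>k. filter (\<lambda>x. \<not> (case x of (c,gs) \<Rightarrow> length gs \<le> 5)) (W k) @ bracket_terms \<beta> P2 k)"
  show thesis
  proof
    show "\<forall>k. \<forall>(c,gs)\<in>set (B k). 6 \<le> length gs"
      using nonresonant_deg_ge_degree[OF nonresonant_deg_ge_bracket_terms[OF nP2, of \<beta>]]
      by (fastforce simp: B_def)
  next
    fix u
    let ?A = "linear_field \<gamma> u" and ?N = "cubic_field \<beta> u"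
    have split: "pmap_deriv P u (?A + ?N) = (pmap_deriv P1 u ?A + pmap_deriv P1 u ?N) + (pmap_deriv P2 u ?A + pmap_deriv P2 u ?N)"
      using linear_add[OF linear_pmap_deriv[of P1 u]] linear_add[OF linear_pmap_deriv[of P2 u]]
      by (simp add: P pmap_deriv_append)
    have "pmap_deriv P1 u ?A = linear_field \<gamma> (pmap_val P1 u) + pmap_val T u"
      using homological_equation[OF \<gamma> T] by (simp add: P1_def first_order_transform_def)
    moreover have "pmap_deriv P2 u ?A = linear_field \<gamma> (pmap_val P2 u) + pmap_val Wlo u"
      using homological_equation[OF \<gamma> nWlo] by (simp add: P2_def)
    moreover have "pmap_val Wlo u + pmap_val (bracket_terms \<beta> P1) u + pmap_val (bracket_terms \<beta> P2) u = pmap_val B u"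
      using pmap_val_filter[of W u "\<lambda>(c,gs). length gs \<le> 5"]
      by (simp add: Wlo_def B_def W_def pmap_val_append vec_eq_iff)
    ultimately show "pmap_deriv P u (?A + ?N)
        = linear_field \<gamma> (pmap_val P u) + cubic_field_deriv \<beta> u (pmap_val P u) + pmap_val T u + pmap_val B u"
      unfolding split pmap_deriv_cubic_field
      by (simp add: P pmap_val_append linear_field_add cubic_field_deriv_add algebra_simps)
  qed
qed

lemma normal_form_cubic_degree:
  assumes "nonresonant_deg_ge \<omega> 2 T"
  shows "\<forall>k. \<forall>(c,gs)\<in>set (normal_form_cubic \<gamma> \<beta> T k). 3 \<le> length gs"
  using subst_deriv_terms_degree[OF nonresonant_deg_ge_degree[OF assms]
      nonresonant_deg_ge_degree[OF nonresonant_normal_form_transform[OF assms]], of \<gamma> \<beta>]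
  by (fastforce simp: normal_form_cubic_def neg_terms_def)

lemma normal_form_transform_subst:
  fixes T :: "'n::finite pmap"
  obtains S where "\<forall>k. \<forall>(c,gs)\<in>set (S k). 5 \<le> length gs"
    and "\<And>u. pmap_deriv T u (pmap_val (normal_form_transform \<gamma> \<beta> T) u)
            = pmap_val S u - pmap_val (normal_form_cubic \<gamma> \<beta> T) u"
proof
  let ?T1 = "subst_deriv_terms T (normal_form_transform \<gamma> \<beta> T)"
  show "\<forall>k. \<forall>(c,gs)\<in>set (filter (\<lambda>x. \<not> (case x of (c,gs) \<Rightarrow> length gs \<le> 4)) (?T1 k)). 5 \<le> length gs"
    by auto
  show "pmap_deriv T u (pmap_val (normal_form_transform \<gamma> \<beta> T) u)
      = pmap_val (\<lambda>k. filter (\<lambda>x. \<not> (case x of (c,gs) \<Rightarrow> length gs \<le> 4)) (?T1 k)) u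
        - pmap_val (normal_form_cubic \<gamma> \<beta> T) u" for u
    using pmap_val_filter[of ?T1 u "\<lambda>(c,gs). length gs \<le> 4"]
    by (simp add: pmap_deriv_pmap_val normal_form_cubic_def vec_eq_iff)
qed

lemma nonresonant_terms_of_poly_map_nonres:
  fixes F :: "complex^'n::finite \<Rightarrow> complex^'n"
  assumes "poly_map_nonres \<omega> F"
  obtains T where "\<And>z. F z = pmap_val T z" and "\<And>k c gs. (c, gs) \<in> set (T k) \<Longrightarrow> frequency \<omega> gs \<noteq> \<omega> k"
proof -
  have ex: "\<forall>k. \<exists>L. (\<forall>z. F z $ k = terms_val L z) \<and> (\<forall>(c, gs)\<in>set L. frequency \<omega> gs \<noteq> \<omega> k)"
  proof
    fix k
    obtain c where c: "is_zzbar_poly_repr c (\<lambda>z. F z $ k)" "\<forall>s t. c (s, t) \<noteq> 0 \<longrightarrow> monomial_nonres \<omega> k s t"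
      using assms unfolding poly_map_nonres_def by blast
    then show "\<exists>L. (\<forall>z. F z $ k = terms_val L z) \<and> (\<forall>(c, gs)\<in>set L. frequency \<omega> gs \<noteq> \<omega> k)"
      using terms_of_zzbar_repr[OF c(1)] by blast
  qed
  obtain T where "\<forall>k. (\<forall>z. F z $ k = terms_val (T k) z) \<and> (\<forall>(c, gs)\<in>set (T k). frequency \<omega> gs \<noteq> \<omega> k)"
    using choice[OF ex] by blast
  then show thesis by (intro that) (auto simp: vec_eq_iff)
qed

text \<open>Since \<open>H(0) = 0\<close> and \<open>DH(0) = 0\<close>, the terms of degree at most one of the Taylor polynomial
  form an affine map with vanishing value and derivative at the origin, hence they cancel.\<close>

lemma smooth_map_nonresonant_taylor_terms:
  fixes H :: "complex^'n::finite \<Rightarrow> complex^'n"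
  assumes H_smooth: "smooth_map H" and H_zero: "H 0 = 0" and DH_zero: "(H has_derivative (\<lambda>_. 0)) (at 0)"
    and nonres: "poly_map_nonres \<omega> (taylor_poly 5 H)"
  obtains T M where "nonresonant_deg_ge \<omega> 2 T" and "M \<ge> 0"
    and "\<And>x. norm x \<le> 1 \<Longrightarrow> norm (H x - pmap_val T x) \<le> M * norm x ^ 6"
proof -
  obtain Tf where Tf: "\<And>z. taylor_poly 5 H z = pmap_val Tf z"
    "\<And>k c gs. (c, gs) \<in> set (Tf k) \<Longrightarrow> frequency \<omega> gs \<noteq> \<omega> k"
    using nonresonant_terms_of_poly_map_nonres[OF nonres] by blast
  obtain M where M: "M \<ge> 0" "\<And>x. norm x \<le> 1 \<Longrightarrow> norm (H x - pmap_val Tf x) \<le> M * norm x ^ 6"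
    using taylor_poly_remainder_bound[OF H_smooth, of 5] by (auto simp: Tf(1))
  define T where "T k = filter (\<lambda>(c, gs). 2 \<le> length gs) (Tf k)" for k
  define Tl where "Tl k = filter (\<lambda>x. \<not> (case x of (c, gs) \<Rightarrow> 2 \<le> length gs)) (Tf k)" for k
  have split: "pmap_val Tf x = pmap_val T x + pmap_val Tl x" for x
    unfolding T_def Tl_def by (rule pmap_val_filter)
  have nT: "nonresonant_deg_ge \<omega> 2 T"
    using Tf(2) by (auto simp: nonresonant_deg_ge_def T_def)
  have T_bound: "norm (pmap_val T x) \<le> pmap_coeff_norm T * norm x ^ 2" if "norm x \<le> 1" for x
    by (rule pmap_val_bound[OF nonresonant_deg_ge_degree[OF nT] that])
  have "pmap_val Tl x = 0" for x
  proof (rule pmap_val_affine_vanishes)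
    show "\<forall>k. \<forall>(c, gs)\<in>set (Tl k). length gs \<le> 1" by (auto simp: Tl_def)
    have "norm (H x - pmap_val Tf x) \<le> M * norm x ^ 2" if "norm x \<le> 1" for x
      using M(2)[OF that] mult_left_mono[OF power_decreasing[of 2 6 "norm x"] M(1)] that by simp
    then have E0: "((\<lambda>x. H x - pmap_val Tf x) has_derivative (\<lambda>_. 0)) (at 0)"
      by (rule has_derivative_zero_of_quadratic_bound[OF M(1)])
    have T0: "(pmap_val T has_derivative (\<lambda>_. 0)) (at 0)"
      by (rule has_derivative_zero_of_quadratic_bound[OF pmap_coeff_norm_nonneg T_bound])
    have "((\<lambda>x. H x - (H x - pmap_val Tf x) - pmap_val T x) has_derivative (\<lambda>_. 0 - 0 - 0)) (at 0)"
      by (intro has_derivative_diff DH_zero E0 T0)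
    then show "(pmap_val Tl has_derivative (\<lambda>_. 0)) (at 0)"
      by (simp add: split)
    show "pmap_val Tl 0 = 0"
      using split[of 0] M(2)[of 0] T_bound[of 0] H_zero by simp
  qed
  then have "pmap_val Tf x = pmap_val T x" for x
    using split by simp
  then show thesis
    using that[OF nT M(1)] M(2) by metis
qed

lemma zzbar_repr_of_terms:
  assumes "\<forall>(c, gs)\<in>set L. d \<le> length gs"
  shows "\<exists>c. is_zzbar_poly_repr c (terms_val L) \<and> (\<forall>s t. c (s, t) \<noteq> 0 \<longrightarrow> monomial_degree s t \<ge> d)"
  using zzbar_coeffs_repr[of L] zzbar_coeffs_degree[OF assms] by blast

section \<open>Near-identity maps\<close>

lemma near_identity_inj_on:
  fixes p :: "'a::real_normed_vector \<Rightarrow> 'a"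
  assumes "convex S" and deriv: "\<And>x. x \<in> S \<Longrightarrow> (p has_derivative Dp x) (at x within S)"
    and bound: "\<And>x. x \<in> S \<Longrightarrow> onorm (Dp x) \<le> C" and small: "\<bar>a\<bar> * C < 1"
  shows "inj_on (\<lambda>u. u + a *\<^sub>R p u) S"
proof (rule inj_onI)
  fix u v assume u: "u \<in> S" and v: "v \<in> S" and eq: "u + a *\<^sub>R p u = v + a *\<^sub>R p v"
  have "norm (p v - p u) \<le> C * norm (v - u)"
    using differentiable_bound[OF \<open>convex S\<close> _ _ v u, of p Dp C] deriv bound by blast
  moreover have "u - v = a *\<^sub>R (p v - p u)" using eq by (simp add: algebra_simps)
  ultimately have "norm (u - v) \<le> (\<bar>a\<bar> * C) * norm (u - v)"
    by (simp add: norm_minus_commute mult_left_mono mult.assoc)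
  then show "u = v"
    using small mult_right_mono[of 1 "\<bar>a\<bar> * C" "norm (u - v)"] by (cases "u = v") auto
qed

lemma near_identity_linear:
  fixes D :: "'a::euclidean_space \<Rightarrow> 'a"
  assumes "linear D" and small: "\<And>w. norm (D w) \<le> norm w / 2"
  shows "bij (\<lambda>w. w + D w)" and "norm w \<le> 2 * norm (w + D w)"
proof -
  show lower: "norm w \<le> 2 * norm (w + D w)" for w
    using norm_triangle_ineq4[of "w + D w" "D w"] small[of w] by simp
  have lin: "linear (\<lambda>w. w + D w)"
    by (intro linear_compose_add linear_id[unfolded id_def] \<open>linear D\<close>)
  have "inj (\<lambda>w. w + D w)"
  proof (rule injI)
    fix x y assume "x + D x = y + D y"
    moreover have "(x - y) + D (x - y) = (x + D x) - (y + D y)"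
      using linear_diff[OF \<open>linear D\<close>, of x y] by (simp add: algebra_simps)
    ultimately have "(x - y) + D (x - y) = 0" by simp
    then show "x = y" using lower[of "x - y"] by simp
  qed
  then show "bij (\<lambda>w. w + D w)"
    using linear_injective_imp_surjective[OF lin] by (simp add: bij_def)
qed

lemma linear_inverse_defect:
  fixes D :: "'a::real_normed_vector \<Rightarrow> 'a"
  assumes "bij D" "linear D" and lower: "\<And>w. norm w \<le> 2 * norm (D w)"
  shows "D (X + (inv D F - X)) = F" and "norm (inv D F - X) \<le> 2 * norm (F - D X)"
proof -
  have DF: "D (inv D F) = F" using \<open>bij D\<close> by (simp add: bij_is_surj surj_f_inv_f)
  then show "D (X + (inv D F - X)) = F" by simp
  show "norm (inv D F - X) \<le> 2 * norm (F - D X)"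
    using lower[of "inv D F - X"] linear_diff[OF \<open>linear D\<close>] DF by simp
qed

lemma smooth_map_near_identity_pmap:
  fixes P :: "'n::finite pmap"
  shows "smooth_map (\<lambda>u. u + a *\<^sub>R pmap_val P u)"
proof -
  define Q where "Q = (\<lambda>k. (1::complex, [(k, False)]) # map (\<lambda>(c, gs). (of_real a * c, gs)) (P k))"
  have comp: "(u + a *\<^sub>R pmap_val P u) $ k = pmap_val Q u $ k" for u k
    unfolding vector_add_component vector_scaleR_component
    by (simp add: Q_def terms_val_map_scale factor_val_def scaleR_conv_of_real)
  have "(\<lambda>u. u + a *\<^sub>R pmap_val P u) = pmap_val Q"
    by (intro ext iffD2[OF vec_eq_iff] allI comp)
  then show ?thesis
    using smooth_map_pmap_val[of Q] by simp
qed

lemma inj_on_near_identity_pmap: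
  fixes P :: "'n::finite pmap"
  assumes P2: "\<forall>k. \<forall>(c, gs)\<in>set (P k). 2 \<le> length gs" and small: "\<bar>a\<bar> * pmap_coeff_deg_norm P \<le> 1 / 2"
  shows "inj_on (\<lambda>u. u + a *\<^sub>R pmap_val P u) (cball 0 1)"
proof (rule near_identity_inj_on)
  show "onorm (pmap_deriv P x) \<le> pmap_coeff_deg_norm P" if "x \<in> cball 0 1" for x
  proof (rule onorm_le)
    fix w
    have "norm (pmap_deriv P x w) \<le> pmap_coeff_deg_norm P * norm x * norm w"
      using that by (intro pmap_deriv_bound[OF P2]) simp
    also have "\<dots> \<le> pmap_coeff_deg_norm P * norm w"
      using mult_left_le_one_le[of "norm w" "norm x"] that pmap_coeff_deg_norm_nonneg[of P]
      by (simp add: mult_left_mono mult.assoc)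
    finally show "norm (pmap_deriv P x w) \<le> pmap_coeff_deg_norm P * norm w" .
  qed
  show "\<bar>a\<bar> * pmap_coeff_deg_norm P < 1" using small by simp
qed (auto intro: pmap_val_has_derivative)

lemma near_identity_pmap_deriv:
  fixes P :: "'n::finite pmap"
  assumes P2: "\<forall>k. \<forall>(c, gs)\<in>set (P k). 2 \<le> length gs" and small: "\<bar>a\<bar> * pmap_coeff_deg_norm P \<le> 1 / 2"
    and u: "norm u \<le> 1"
  defines "D \<equiv> \<lambda>w. w + a *\<^sub>R pmap_deriv P u w"
  shows "bij D" and "D (X + (inv D F - X)) = F" and "cmod ((inv D F - X) $ k) \<le> 2 * norm (F - D X)"
proof -
  have half: "norm (a *\<^sub>R pmap_deriv P u w) \<le> norm w / 2" for w
  proof -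
    have "norm (a *\<^sub>R pmap_deriv P u w) \<le> \<bar>a\<bar> * (pmap_coeff_deg_norm P * norm u * norm w)"
      using pmap_deriv_bound[OF P2 u] by (simp add: mult_left_mono)
    also have "\<dots> \<le> (\<bar>a\<bar> * pmap_coeff_deg_norm P) * norm w"
      using mult_left_le_one_le[of "norm w" "norm u"] u pmap_coeff_deg_norm_nonneg[of P]
      by (simp add: mult.assoc mult_left_mono)
    also have "\<dots> \<le> norm w / 2" using mult_right_mono[OF small norm_ge_zero[of w]] by simp
    finally show ?thesis .
  qed
  have lin: "linear D"
    unfolding D_def using linear_pmap_deriv[of P u]
    by (intro linear_compose_add linear_id[unfolded id_def] linear_compose_scale_right)
  have D: "bij D" "\<And>w. norm w \<le> 2 * norm (D w)"
    using near_identity_linear[OF linear_compose_scale_right[OF linear_pmap_deriv[of P u]] half]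
    by (simp_all add: D_def)
  then show "bij D" by blast
  show "D (X + (inv D F - X)) = F" by (rule linear_inverse_defect(1)[OF D(1) lin D(2)])
  show "cmod ((inv D F - X) $ k) \<le> 2 * norm (F - D X)"
    using Finite_Cartesian_Product.norm_nth_le linear_inverse_defect(2)[OF D(1) lin D(2)] by (rule order_trans)
qed

lemma near_identity_pmap:
  fixes P :: "'n::finite pmap"
  assumes P2: "\<forall>k. \<forall>(c, gs)\<in>set (P k). 2 \<le> length gs" and small: "\<bar>a\<bar> * pmap_coeff_deg_norm P \<le> 1 / 2"
  shows "smooth_map (\<lambda>u. u + a *\<^sub>R pmap_val P u)" and "0 + a *\<^sub>R pmap_val P 0 = 0"
    and "inj_on (\<lambda>u. u + a *\<^sub>R pmap_val P u) (cball 0 1)"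
    and "((\<lambda>u. u + a *\<^sub>R pmap_val P u) has_derivative (\<lambda>w. w + a *\<^sub>R pmap_deriv P u w)) (at u)"
proof -
  show "smooth_map (\<lambda>u. u + a *\<^sub>R pmap_val P u)" by (rule smooth_map_near_identity_pmap)
  show "0 + a *\<^sub>R pmap_val P 0 = 0" using pmap_val_bound[OF P2, of 0] by simp
  show "inj_on (\<lambda>u. u + a *\<^sub>R pmap_val P u) (cball 0 1)" by (rule inj_on_near_identity_pmap[OF P2 small])
  show "((\<lambda>u. u + a *\<^sub>R pmap_val P u) has_derivative (\<lambda>w. w + a *\<^sub>R pmap_deriv P u w)) (at u)"
    by (intro derivative_intros pmap_val_has_derivative)
qed

section \<open>The conjugation\<close>

definition normal_form_field ::
  "('n::finite \<Rightarrow> complex) \<Rightarrow> ('n \<Rightarrow> complex) \<Rightarrow> 'n pmap \<Rightarrow> real \<Rightarrow> complex^'n \<Rightarrow> complex^'n" where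
  "normal_form_field \<gamma> \<beta> G a u = linear_field \<gamma> u + cubic_field \<beta> u - a\<^sup>2 *\<^sub>R pmap_val G u"

lemma normal_form_field_add_vec:
  "(\<chi> k. \<gamma> k * u $ k - \<beta> k * u $ k * complex_of_real ((cmod (u $ k))\<^sup>2)
      - complex_of_real (a\<^sup>2) * terms_val (G k) u + v $ k) = normal_form_field \<gamma> \<beta> G a u + v"
proof -
  have "(normal_form_field \<gamma> \<beta> G a u + v) $ k = \<gamma> k * u $ k - \<beta> k * u $ k * complex_of_real ((cmod (u $ k))\<^sup>2)
      - complex_of_real (a\<^sup>2) * terms_val (G k) u + v $ k" for k
    unfolding normal_form_field_def vector_add_component vector_minus_component vector_scaleR_component
      linear_field_def cubic_field_def vec_lambda_beta pmap_val_nth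
    by (simp add: scaleR_conv_of_real)
  then show ?thesis by (simp add: vec_eq_iff)
qed

definition conjugation_defect :: "('n::finite \<Rightarrow> complex) \<Rightarrow> ('n \<Rightarrow> complex) \<Rightarrow> (complex^'n \<Rightarrow> complex^'n)
    \<Rightarrow> 'n pmap \<Rightarrow> 'n pmap \<Rightarrow> real \<Rightarrow> complex^'n \<Rightarrow> complex^'n" where
  "conjugation_defect \<gamma> \<beta> H P G a u = coupled_field \<gamma> \<beta> H a (u + a *\<^sub>R pmap_val P u)
    - (normal_form_field \<gamma> \<beta> G a u + a *\<^sub>R pmap_deriv P u (normal_form_field \<gamma> \<beta> G a u))"

text \<open>The defect of the conjugation, sorted by order: with \<open>w = \<alpha> P(u)\<close> the terms of order
  \<open>\<alpha>\<close> in \<open>u\<^sup>0 \<dots> u\<^sup>5\<close> cancel by the homological equations, and those of order \<open>\<alpha>\<^sup>2\<close> in \<open>u\<^sup>3, u\<^sup>4\<close>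
  are exactly \<open>-G\<close>.\<close>

lemma coupled_field_near_identity:
  fixes P T G :: "'n::finite pmap" and B S H :: "complex^'n \<Rightarrow> complex^'n" and a :: real
  assumes hom: "pmap_deriv P u (linear_field \<gamma> u + cubic_field \<beta> u)
      = linear_field \<gamma> (pmap_val P u) + cubic_field_deriv \<beta> u (pmap_val P u) + pmap_val T u + B u"
    and subst: "pmap_deriv T u (pmap_val P u) = S u - pmap_val G u"
  defines "p \<equiv> pmap_val P u" and "w \<equiv> a *\<^sub>R pmap_val P u"
  shows "conjugation_defect \<gamma> \<beta> H P G a u
    = a *\<^sub>R (H (u + w) - pmap_val T (u + w)) - a *\<^sub>R B u + a\<^sup>2 *\<^sub>R (cubic_field_second_order \<beta> u p + S u)
      + a *\<^sub>R pmap_remainder T u w + a ^ 3 *\<^sub>R (cubic_field \<beta> p + pmap_deriv P u (pmap_val G u))"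
proof -
  have "pmap_deriv T u w = a *\<^sub>R (S u - pmap_val G u)"
    using linear_scale[OF linear_pmap_deriv[of T u]] subst by (simp add: w_def)
  then have HT: "H (u + w) = (H (u + w) - pmap_val T (u + w))
      + (pmap_val T u + a *\<^sub>R (S u - pmap_val G u) + pmap_remainder T u w)"
    by (simp add: pmap_val_add)
  have DX: "pmap_deriv P u (normal_form_field \<gamma> \<beta> G a u)
      = pmap_deriv P u (linear_field \<gamma> u + cubic_field \<beta> u) - a\<^sup>2 *\<^sub>R pmap_deriv P u (pmap_val G u)"
    using linear_pmap_deriv[of P u] by (simp add: normal_form_field_def linear_diff linear_scale)
  show ?thesis
    unfolding conjugation_defect_def w_def[symmetric] coupled_field_split DX hom
    by (subst HT) (simp add: normal_form_field_def w_def p_def linear_field_add linear_field_scaleR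
        cubic_field_expand algebra_simps power2_eq_square power3_eq_cube)
qed

lemma norm_scaleR_le_mult:
  assumes "norm v \<le> C * x"
  shows "norm (c *\<^sub>R v) \<le> C * (\<bar>c\<bar> * x)"
  using mult_left_mono[OF assms abs_ge_zero[of c]] by (simp add: mult_ac)

lemma norm_five_terms_le:
  fixes x1 x2 x3 x4 x5 :: "'a::real_normed_vector"
  assumes "norm x1 \<le> c1 * A1" "norm x2 \<le> c2 * A1" "norm x3 \<le> c3 * A2" "norm x4 \<le> c4 * A3" "norm x5 \<le> c5 * A3"
    and "0 \<le> A1" "0 \<le> A2" "0 \<le> A3" and "0 \<le> c1" "0 \<le> c2" "0 \<le> c3" "0 \<le> c4" "0 \<le> c5"
  shows "norm (x1 - x2 + x3 + x4 + x5) \<le> (c1 + c2 + c3 + c4 + c5) * (A1 + A2 + A3)"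
proof -
  let ?A = "A1 + A2 + A3"
  have "c1 * A1 \<le> c1 * ?A" "c2 * A1 \<le> c2 * ?A" "c3 * A2 \<le> c3 * ?A" "c4 * A3 \<le> c4 * ?A" "c5 * A3 \<le> c5 * ?A"
    using assms by (intro mult_left_mono; simp)+
  moreover have "(c1 + c2 + c3 + c4 + c5) * ?A = c1 * ?A + c2 * ?A + c3 * ?A + c4 * ?A + c5 * ?A"
    by (simp add: distrib_right)
  ultimately show ?thesis
    using norm_triangle_ineq[of "x1 - x2 + x3 + x4" x5] norm_triangle_ineq[of "x1 - x2 + x3" x4]
      norm_triangle_ineq[of "x1 - x2" x3] norm_triangle_ineq4[of x1 x2] assms(1-5) by linarith
qed

lemma cubic_field_near_origin_bounds:
  assumes p: "norm p \<le> Cp * norm u ^ 2" and u: "norm u \<le> 1" and "Cp \<ge> 0"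
  shows "norm (cubic_field_second_order \<beta> u p) \<le> 3 * (\<Sum>k\<in>UNIV. cmod (\<beta> k)) * Cp\<^sup>2 * norm u ^ 5"
    and "norm (cubic_field \<beta> p) \<le> (\<Sum>k\<in>UNIV. cmod (\<beta> k)) * Cp ^ 3 * norm u ^ 4"
proof -
  let ?B = "\<Sum>k\<in>UNIV. cmod (\<beta> k)"
  have B: "?B \<ge> 0" by (simp add: sum_nonneg)
  have "norm (cubic_field_second_order \<beta> u p) \<le> 3 * ?B * norm u * (norm p)\<^sup>2"
    by (rule cubic_field_second_order_bound)
  also have "\<dots> \<le> 3 * ?B * norm u * (Cp * norm u ^ 2)\<^sup>2"
    using p B by (intro mult_left_mono power_mono) auto
  finally show "norm (cubic_field_second_order \<beta> u p) \<le> 3 * ?B * Cp\<^sup>2 * norm u ^ 5"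
    by (simp add: power_mult_distrib eval_nat_numeral mult_ac)
  have "norm (cubic_field \<beta> p) \<le> ?B * (Cp * norm u ^ 2) ^ 3"
    using order_trans[OF cubic_field_bound mult_left_mono[OF power_mono[OF p] B]] by simp
  also have "\<dots> = (?B * Cp ^ 3) * norm u ^ 6" by (simp add: power_mult_distrib mult.assoc)
  also have "\<dots> \<le> (?B * Cp ^ 3) * norm u ^ 4"
    using u B \<open>Cp \<ge> 0\<close> by (intro mult_left_mono power_decreasing) auto
  finally show "norm (cubic_field \<beta> p) \<le> ?B * Cp ^ 3 * norm u ^ 4" .
qed

lemma pmap_deriv_pmap_val_bound:
  assumes P2: "\<forall>k. \<forall>(c, gs)\<in>set (P k). 2 \<le> length gs" and G3: "\<forall>k. \<forall>(c, gs)\<in>set (G k). 3 \<le> length gs"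
    and u: "norm u \<le> 1"
  shows "norm (pmap_deriv P u (pmap_val G u)) \<le> pmap_coeff_deg_norm P * pmap_coeff_norm G * norm u ^ 4"
proof -
  have "norm (pmap_deriv P u (pmap_val G u)) \<le> pmap_coeff_deg_norm P * norm u * norm (pmap_val G u)"
    by (rule pmap_deriv_bound[OF P2 u])
  also have "\<dots> \<le> pmap_coeff_deg_norm P * norm u * (pmap_coeff_norm G * norm u ^ 3)"
    using pmap_val_bound[OF G3 u] pmap_coeff_deg_norm_nonneg[of P] by (intro mult_left_mono) auto
  finally show ?thesis by (simp add: eval_nat_numeral mult_ac)
qed

lemma near_identity_shift_bound:
  fixes P :: "'n::finite pmap"
  assumes P2: "\<forall>k. \<forall>(c, gs)\<in>set (P k). 2 \<le> length gs" and a: "\<bar>a\<bar> * pmap_coeff_norm P \<le> 1"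
    and u: "norm u \<le> 1"
  shows "norm (a *\<^sub>R pmap_val P u) \<le> norm u ^ 2"
proof -
  have "norm (a *\<^sub>R pmap_val P u) \<le> (\<bar>a\<bar> * pmap_coeff_norm P) * norm u ^ 2"
    using mult_left_mono[OF pmap_val_bound[OF P2 u] abs_ge_zero[of a]] by (simp add: mult.assoc)
  also have "\<dots> \<le> norm u ^ 2"
    using mult_left_le_one_le[of "norm u ^ 2" "\<bar>a\<bar> * pmap_coeff_norm P"] a pmap_coeff_norm_nonneg[of P] by simp
  finally show ?thesis .
qed

lemma sixth_order_bound_shifted:
  assumes "M \<ge> 0" "\<And>x. norm x \<le> 1 \<Longrightarrow> norm (f x) \<le> M * norm x ^ 6"
    and w: "norm w \<le> norm u" and u: "norm u < 1 / 2"
  shows "norm (f (u + w)) \<le> (64 * M) * norm u ^ 6"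
proof -
  have uw: "norm (u + w) \<le> 2 * norm u" using norm_triangle_ineq[of u w] w by simp
  then have "norm (f (u + w)) \<le> M * norm (u + w) ^ 6" using u by (intro assms(2)) simp
  also have "\<dots> \<le> M * (2 * norm u) ^ 6" by (intro mult_left_mono power_mono uw assms(1)) simp
  finally show ?thesis by (simp add: power_mult_distrib)
qed

lemma near_identity_conjugation_defect:
  fixes P T G B S :: "'n::finite pmap" and H :: "complex^'n \<Rightarrow> complex^'n"
  assumes P2: "\<forall>k. \<forall>(c, gs)\<in>set (P k). 2 \<le> length gs"
    and B6: "\<forall>k. \<forall>(c, gs)\<in>set (B k). 6 \<le> length gs" and S5: "\<forall>k. \<forall>(c, gs)\<in>set (S k). 5 \<le> length gs"
    and G3: "\<forall>k. \<forall>(c, gs)\<in>set (G k). 3 \<le> length gs"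
    and hom: "\<And>u. pmap_deriv P u (linear_field \<gamma> u + cubic_field \<beta> u)
      = linear_field \<gamma> (pmap_val P u) + cubic_field_deriv \<beta> u (pmap_val P u) + pmap_val T u + pmap_val B u"
    and subst: "\<And>u. pmap_deriv T u (pmap_val P u) = pmap_val S u - pmap_val G u"
    and E: "M \<ge> 0" "\<And>x. norm x \<le> 1 \<Longrightarrow> norm (H x - pmap_val T x) \<le> M * norm x ^ 6"
  obtains K where "\<And>a u. \<bar>a\<bar> * pmap_coeff_norm P \<le> 1 \<Longrightarrow> norm u < 1 / 2 \<Longrightarrow>
      norm (conjugation_defect \<gamma> \<beta> H P G a u)
      \<le> K * (\<bar>a\<bar> * norm u ^ 6 + a\<^sup>2 * norm u ^ 5 + \<bar>a\<bar> ^ 3 * norm u ^ 4)"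
proof -
  define Cp Cq Bs where "Cp = pmap_coeff_norm P" and "Cq = pmap_coeff_deg2_norm T" and "Bs = (\<Sum>k\<in>UNIV. cmod (\<beta> k))"
  have nonneg: "Cp \<ge> 0" "Cq \<ge> 0" "Bs \<ge> 0"
    by (simp_all add: Cp_def Cq_def Bs_def sum_nonneg pmap_coeff_norm_nonneg pmap_coeff_deg2_norm_nonneg)
  show thesis
  proof (rule that)
    fix a :: real and u :: "complex^'n"
    assume a: "\<bar>a\<bar> * pmap_coeff_norm P \<le> 1" and u: "norm u < 1 / 2"
    define p w where "p = pmap_val P u" and "w = a *\<^sub>R pmap_val P u"
    have u1: "norm u \<le> 1" using u by simp
    have np: "norm p \<le> Cp * norm u ^ 2"
      unfolding p_def Cp_def by (rule pmap_val_bound[OF P2 u1])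
    have nw1: "norm w \<le> norm u"
      using near_identity_shift_bound[OF P2 a u1] u1 unfolding w_def
      by (simp add: power2_eq_square mult_left_le_one_le order_trans)
    have b1: "norm (a *\<^sub>R pmap_val B u) \<le> pmap_coeff_norm B * (\<bar>a\<bar> * norm u ^ 6)"
      by (rule norm_scaleR_le_mult) (simp add: pmap_val_bound[OF B6 u1])
    have b2: "norm (a *\<^sub>R (H (u + w) - pmap_val T (u + w))) \<le> (64 * M) * (\<bar>a\<bar> * norm u ^ 6)"
      by (rule norm_scaleR_le_mult) (rule sixth_order_bound_shifted[OF E nw1 u])
    have "norm (cubic_field_second_order \<beta> u p + pmap_val S u) \<le> (3 * Bs * Cp\<^sup>2 + pmap_coeff_norm S) * norm u ^ 5"
      using cubic_field_near_origin_bounds(1)[OF np u1 nonneg(1), of \<beta>] pmap_val_bound[OF S5 u1]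
        norm_triangle_ineq[of "cubic_field_second_order \<beta> u p" "pmap_val S u"]
      by (simp add: Bs_def algebra_simps)
    then have b3: "norm (a\<^sup>2 *\<^sub>R (cubic_field_second_order \<beta> u p + pmap_val S u))
        \<le> (3 * Bs * Cp\<^sup>2 + pmap_coeff_norm S) * (a\<^sup>2 * norm u ^ 5)"
      by (metis norm_scaleR_le_mult abs_power2)
    have "norm (pmap_remainder T u w) \<le> Cq * (a\<^sup>2 * (norm p)\<^sup>2)"
      using pmap_remainder_bound[of u w T] nw1 u by (simp add: Cq_def w_def p_def power_mult_distrib)
    also have "\<dots> \<le> Cq * (a\<^sup>2 * (Cp * norm u ^ 2)\<^sup>2)"
      using np nonneg by (intro mult_left_mono power_mono) auto
    finally have b4: "norm (a *\<^sub>R pmap_remainder T u w) \<le> (Cq * Cp\<^sup>2) * (\<bar>a\<bar> ^ 3 * norm u ^ 4)"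
      using norm_scaleR_le_mult[of "pmap_remainder T u w" Cq "a\<^sup>2 * (Cp * norm u ^ 2)\<^sup>2" a]
      by (simp add: power_mult_distrib power2_eq_square power3_eq_cube eval_nat_numeral mult_ac)
    have "norm (cubic_field \<beta> p + pmap_deriv P u (pmap_val G u))
        \<le> (Bs * Cp ^ 3 + pmap_coeff_deg_norm P * pmap_coeff_norm G) * norm u ^ 4"
      using cubic_field_near_origin_bounds(2)[OF np u1 nonneg(1), of \<beta>] pmap_deriv_pmap_val_bound[OF P2 G3 u1]
        norm_triangle_ineq[of "cubic_field \<beta> p" "pmap_deriv P u (pmap_val G u)"]
      by (simp add: Bs_def distrib_right)
    then have b5: "norm (a ^ 3 *\<^sub>R (cubic_field \<beta> p + pmap_deriv P u (pmap_val G u)))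
        \<le> (Bs * Cp ^ 3 + pmap_coeff_deg_norm P * pmap_coeff_norm G) * (\<bar>a\<bar> ^ 3 * norm u ^ 4)"
      by (metis norm_scaleR_le_mult power_abs)
    show "norm (conjugation_defect \<gamma> \<beta> H P G a u)
      \<le> (64 * M + pmap_coeff_norm B + (3 * Bs * Cp\<^sup>2 + pmap_coeff_norm S) + Cq * Cp\<^sup>2
          + (Bs * Cp ^ 3 + pmap_coeff_deg_norm P * pmap_coeff_norm G))
        * (\<bar>a\<bar> * norm u ^ 6 + a\<^sup>2 * norm u ^ 5 + \<bar>a\<bar> ^ 3 * norm u ^ 4)"
      unfolding coupled_field_near_identity[where B = "pmap_val B" and S = "pmap_val S", OF hom subst]
      using nonneg E(1) pmap_coeff_norm_nonneg[of B] pmap_coeff_norm_nonneg[of S] pmap_coeff_norm_nonneg[of G]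
        pmap_coeff_deg_norm_nonneg[of P]
      by (intro norm_five_terms_le[OF b2[unfolded w_def] b1 b3[unfolded p_def] b4[unfolded w_def] b5[unfolded p_def]])
        (auto intro: add_nonneg_nonneg mult_nonneg_nonneg)
  qed
qed

lemma small_parameter:
  fixes a A B :: real
  assumes "0 \<le> A" "0 \<le> B" and a: "\<bar>a\<bar> < 1 / (2 * A + B + 1)"
  shows "\<bar>a\<bar> * A \<le> 1 / 2" and "\<bar>a\<bar> * B \<le> 1"
proof -
  have "\<bar>a\<bar> * (2 * A + B + 1) < 1 / (2 * A + B + 1) * (2 * A + B + 1)"
    using assms by (intro mult_strict_right_mono) auto
  then have "2 * (\<bar>a\<bar> * A) + \<bar>a\<bar> * B + \<bar>a\<bar> < 1"
    using assms by (simp add: algebra_simps)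
  moreover have "\<bar>a\<bar> * A \<ge> 0" "\<bar>a\<bar> * B \<ge> 0" using assms by simp_all
  ultimately show "\<bar>a\<bar> * A \<le> 1 / 2" and "\<bar>a\<bar> * B \<le> 1" by linarith+
qed

lemma normal_form_construction:
  fixes \<omega> :: "'n::finite \<Rightarrow> real" and \<beta> \<gamma> :: "'n \<Rightarrow> complex" and H :: "complex^'n \<Rightarrow> complex^'n"
  assumes gamma_def: "\<And>k. \<gamma> k = Complex lam (\<omega> k)"
    and H_smooth: "smooth_map H" and H_zero: "H 0 = 0" and DH_zero: "(H has_derivative (\<lambda>_. 0)) (at 0)"
    and nonres: "poly_map_nonres \<omega> (taylor_poly 5 H)"
  obtains P G :: "'n pmap" and K where "\<forall>k. \<forall>(c, gs)\<in>set (P k). 2 \<le> length gs"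
    and "\<forall>k. \<forall>(c, gs)\<in>set (G k). 3 \<le> length gs"
    and "\<And>a u. \<bar>a\<bar> * pmap_coeff_norm P \<le> 1 \<Longrightarrow> norm u < 1 / 2 \<Longrightarrow>
      norm (conjugation_defect \<gamma> \<beta> H P G a u)
      \<le> K * (\<bar>a\<bar> * norm u ^ 6 + a\<^sup>2 * norm u ^ 5 + \<bar>a\<bar> ^ 3 * norm u ^ 4)"
proof -
  obtain T M where T: "nonresonant_deg_ge \<omega> 2 T" and M: "M \<ge> 0"
      "\<And>x. norm x \<le> 1 \<Longrightarrow> norm (H x - pmap_val T x) \<le> M * norm x ^ 6"
    using smooth_map_nonresonant_taylor_terms[OF H_smooth H_zero DH_zero nonres] by blast
  define P G where "P = normal_form_transform \<gamma> \<beta> T" and "G = normal_form_cubic \<gamma> \<beta> T"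
  have P2: "\<forall>k. \<forall>(c, gs)\<in>set (P k). 2 \<le> length gs"
    unfolding P_def by (rule nonresonant_deg_ge_degree[OF nonresonant_normal_form_transform[OF T]])
  have G3: "\<forall>k. \<forall>(c, gs)\<in>set (G k). 3 \<le> length gs"
    unfolding G_def by (rule normal_form_cubic_degree[OF T])
  obtain B where B: "\<forall>k. \<forall>(c, gs)\<in>set (B k). 6 \<le> length gs"
      "\<And>u. pmap_deriv P u (linear_field \<gamma> u + cubic_field \<beta> u)
        = linear_field \<gamma> (pmap_val P u) + cubic_field_deriv \<beta> u (pmap_val P u) + pmap_val T u + pmap_val B u"
    using normal_form_transform_homological[OF gamma_def T] unfolding P_def by metis
  obtain S where S: "\<forall>k. \<forall>(c, gs)\<in>set (S k). 5 \<le> length gs"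
      "\<And>u. pmap_deriv T u (pmap_val P u) = pmap_val S u - pmap_val G u"
    using normal_form_transform_subst unfolding P_def G_def by metis
  show thesis
    using that[OF P2 G3] near_identity_conjugation_defect[OF P2 B(1) S(1) G3 B(2) S(2) M]
    by blast
qed

lemma conjugation_of_defect_bound:
  fixes P G :: "'n::finite pmap" and \<beta> \<gamma> :: "'n \<Rightarrow> complex" and H :: "complex^'n \<Rightarrow> complex^'n"
  assumes P2: "\<forall>k. \<forall>(c, gs)\<in>set (P k). 2 \<le> length gs"
    and G3: "\<forall>k. \<forall>(c, gs)\<in>set (G k). 3 \<le> length gs"
    and K: "\<And>a u. \<bar>a\<bar> * pmap_coeff_norm P \<le> 1 \<Longrightarrow> norm u < 1 / 2 \<Longrightarrow>
      norm (conjugation_defect \<gamma> \<beta> H P G a u) \<le> K * (\<bar>a\<bar> * norm u ^ 6 + a\<^sup>2 * norm u ^ 5 + \<bar>a\<bar> ^ 3 * norm u ^ 4)"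
  shows "\<exists>\<epsilon>>0. \<exists>r>0. \<exists>C. \<exists>G :: 'n \<Rightarrow> complex^'n \<Rightarrow> complex.
           \<exists>h :: real \<Rightarrow> complex^'n \<Rightarrow> complex^'n.
           \<exists>Dh :: real \<Rightarrow> complex^'n \<Rightarrow> complex^'n \<Rightarrow> complex^'n.
           \<exists>R :: real \<Rightarrow> complex^'n \<Rightarrow> complex^'n.
     (\<forall>k. \<exists>c. is_zzbar_poly_repr c (G k) \<and>
              (\<forall>s t. c (s, t) \<noteq> 0 \<longrightarrow> monomial_degree s t \<ge> 3)) \<and>
     (\<forall>\<alpha>. \<bar>\<alpha>\<bar> < \<epsilon> \<longrightarrow>
        smooth_map (h \<alpha>) \<and> h \<alpha> 0 = 0 \<and> inj_on (h \<alpha>) (ball 0 r) \<and>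
        (\<forall>u\<in>ball 0 r.
           (h \<alpha> has_derivative Dh \<alpha> u) (at u) \<and> bij (Dh \<alpha> u) \<and>
           (\<forall>k. cmod (R \<alpha> u $ k) \<le> C * (\<bar>\<alpha>\<bar> * norm u ^ 6 + \<alpha>\<^sup>2 * norm u ^ 5 + \<bar>\<alpha>\<bar> ^ 3 * norm u ^ 4)) \<and>
           Dh \<alpha> u (\<chi> k. \<gamma> k * u $ k - \<beta> k * u $ k * complex_of_real ((cmod (u $ k))\<^sup>2)
                       - complex_of_real (\<alpha>\<^sup>2) * G k u + R \<alpha> u $ k)
             = coupled_field \<gamma> \<beta> H \<alpha> (h \<alpha> u)))"
proof -
  define \<epsilon> where "\<epsilon> = 1 / (2 * pmap_coeff_deg_norm P + pmap_coeff_norm P + 1)"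
  have small: "\<bar>a\<bar> * pmap_coeff_deg_norm P \<le> 1 / 2" "\<bar>a\<bar> * pmap_coeff_norm P \<le> 1" if "\<bar>a\<bar> < \<epsilon>" for a
    using small_parameter[OF pmap_coeff_deg_norm_nonneg pmap_coeff_norm_nonneg] that by (simp_all add: \<epsilon>_def)
  define Dh where "Dh = (\<lambda>a u w. w + a *\<^sub>R pmap_deriv P u w)"
  define R where "R = (\<lambda>a u. inv (Dh a u) (coupled_field \<gamma> \<beta> H a (u + a *\<^sub>R pmap_val P u)) - normal_form_field \<gamma> \<beta> G a u)"
  show ?thesis
  proof (rule exI[of _ \<epsilon>], rule conjI[rotated], rule exI[of _ "1/2"], rule conjI[rotated],
      rule exI[of _ "2 * K"], rule exI[of _ "\<lambda>k. terms_val (G k)"], rule exI[of _ "\<lambda>a u. u + a *\<^sub>R pmap_val P u"],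
      rule exI[of _ Dh], rule exI[of _ R], intro conjI allI impI ballI)
    show "\<epsilon> > 0" "(1/2::real) > 0"
      using pmap_coeff_deg_norm_nonneg[of P] pmap_coeff_norm_nonneg[of P] by (simp_all add: \<epsilon>_def)
    show "\<exists>c. is_zzbar_poly_repr c (terms_val (G k)) \<and> (\<forall>s t. c (s, t) \<noteq> 0 \<longrightarrow> 3 \<le> monomial_degree s t)" for k
      using zzbar_repr_of_terms G3 by blast
    fix a :: real assume a: "\<bar>a\<bar> < \<epsilon>"
    note h = near_identity_pmap[OF P2 small(1)[OF a]]
    show "smooth_map (\<lambda>u. u + a *\<^sub>R pmap_val P u)" "0 + a *\<^sub>R pmap_val P 0 = 0" by (fact h(1), fact h(2))
    show "inj_on (\<lambda>u. u + a *\<^sub>R pmap_val P u) (ball 0 (1/2))" by (rule inj_on_subset[OF h(3)]) auto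
    fix u :: "complex^'n" assume u: "u \<in> ball 0 (1/2)"
    have "norm u \<le> 1" using u by simp
    note Dh = near_identity_pmap_deriv[OF P2 small(1)[OF a] this]
    show "((\<lambda>u. u + a *\<^sub>R pmap_val P u) has_derivative Dh a u) (at u)" "bij (Dh a u)"
      using h(4) Dh(1) by (simp_all add: Dh_def)
    show "cmod (R a u $ k) \<le> 2 * K * (\<bar>a\<bar> * norm u ^ 6 + a\<^sup>2 * norm u ^ 5 + \<bar>a\<bar> ^ 3 * norm u ^ 4)" for k
    proof -
      have "cmod (R a u $ k) \<le> 2 * norm (conjugation_defect \<gamma> \<beta> H P G a u)"
        using Dh(3) by (simp add: R_def Dh_def conjugation_defect_def)
      also have "\<dots> \<le> 2 * (K * (\<bar>a\<bar> * norm u ^ 6 + a\<^sup>2 * norm u ^ 5 + \<bar>a\<bar> ^ 3 * norm u ^ 4))"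
        using K[OF small(2)[OF a]] u by simp
      finally show ?thesis by (simp add: mult.assoc)
    qed
    show "Dh a u (\<chi> k. \<gamma> k * u $ k - \<beta> k * u $ k * complex_of_real ((cmod (u $ k))\<^sup>2)
        - complex_of_real (a\<^sup>2) * terms_val (G k) u + R a u $ k) = coupled_field \<gamma> \<beta> H a (u + a *\<^sub>R pmap_val P u)"
      unfolding R_def normal_form_field_add_vec using Dh(2) by (simp add: Dh_def)
  qed
qed

theorem mainTheorem1:
  fixes lam :: real and \<omega> :: "'n::finite \<Rightarrow> real" and \<beta> \<gamma> :: "'n \<Rightarrow> complex"
    and H :: "complex^'n \<Rightarrow> complex^'n"
  assumes gamma_def: "\<And>k. \<gamma> k = Complex lam (\<omega> k)"
    and gamma_nz: "\<And>k. \<gamma> k \<noteq> 0"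
    and beta_nz: "\<And>k. \<beta> k \<noteq> 0"
    and H_smooth: "smooth_map H"
    and H_zero: "H 0 = 0"
    and DH_zero: "(H has_derivative (\<lambda>_. 0)) (at 0)"
    and nonres: "poly_map_nonres \<omega> (taylor_poly 5 H)"
  shows "\<exists>\<epsilon>>0. \<exists>r>0. \<exists>C. \<exists>G :: 'n \<Rightarrow> complex^'n \<Rightarrow> complex.
           \<exists>h :: real \<Rightarrow> complex^'n \<Rightarrow> complex^'n.
           \<exists>Dh :: real \<Rightarrow> complex^'n \<Rightarrow> complex^'n \<Rightarrow> complex^'n.
           \<exists>R :: real \<Rightarrow> complex^'n \<Rightarrow> complex^'n.
     (\<forall>k. \<exists>c. is_zzbar_poly_repr c (G k) \<and>
              (\<forall>s t. c (s, t) \<noteq> 0 \<longrightarrow> monomial_degree s t \<ge> 3)) \<and>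
     (\<forall>\<alpha>. \<bar>\<alpha>\<bar> < \<epsilon> \<longrightarrow>
        smooth_map (h \<alpha>) \<and> h \<alpha> 0 = 0 \<and> inj_on (h \<alpha>) (ball 0 r) \<and>
        (\<forall>u\<in>ball 0 r.
           (h \<alpha> has_derivative Dh \<alpha> u) (at u) \<and> bij (Dh \<alpha> u) \<and>
           (\<forall>k. cmod (R \<alpha> u $ k) \<le> C * (\<bar>\<alpha>\<bar> * norm u ^ 6 + \<alpha>\<^sup>2 * norm u ^ 5 + \<bar>\<alpha>\<bar> ^ 3 * norm u ^ 4)) \<and>
           Dh \<alpha> u (\<chi> k. \<gamma> k * u $ k - \<beta> k * u $ k * complex_of_real ((cmod (u $ k))\<^sup>2)
                       - complex_of_real (\<alpha>\<^sup>2) * G k u + R \<alpha> u $ k)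
             = coupled_field \<gamma> \<beta> H \<alpha> (h \<alpha> u)))"
  by (rule normal_form_construction[OF gamma_def H_smooth H_zero DH_zero nonres]) (rule conjugation_of_defect_bound)

end
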